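(* Let $\langle X\mid R\rangle$ be an extra-confluent $N$-homogeneous presentation. Let $m,r,k$ be integers with $m\geq N+2$, $r\geq0$, $2\leq k\leq N-1$ and $r+k\leq m-N$. Then: (1) $S^{(m)}_r\vee S^{(m)}_{r+k}=S^{(m)}_r\vee S^{(m)}_{r+1}\vee\cdots\vee S^{(m)}_{r+k}$; (2) $\left(S^{(m)}_r\wedge\cdots\wedge S^{(m)}_{r+k-1}\right)\vee S^{(m)}_{r+k}=S^{(m)}_{r+k-1}\vee S^{(m)}_{r+k}$.
   Context: $\mathbb{K}$ is a field, $N\geq2$, $X^{(m)}$ words of length $m$, $V=\mathbb{K}X$, $V^{\otimes m}=\mathbb{K}X^{(m)}$. $R\subset V^{\otimes N}$, $\overline R=\mathrm{span}(R)$. $X$ is totally ordered, $X^{(m)}$ lexicographically ordered, $\mathrm{lm}(f)$ greatest word in $f\neq0$. Conventions: leading coefficients in $R$ are $1$; a word is a normal form if it has no factor $\mathrm{lm}(f)$, $f\in R$; the presentation is reduced ($\mathrm{lm}(f)-f$ is a combination of normal-form words; $\mathrm{lm}(f)$ has no factor $\mathrm{lm}(g)$, $g\in R\setminus\{f\}$). $S\in\mathrm{End}(V^{\otimes N})$: $S(\mathrm{lm}(f))=\mathrm{lm}(f)-f$ ($f\in R$), $S(w)=w$ otherwise. $\langle t,s\rangle^k=\cdots sts$ ($k$ factors). Side-confluent: for each $1\leq m\leq N-1$ some $k$ gives $\langle\mathrm{id}_{V^{\otimes m}}\otimes S,S\otimes\mathrm{id}_{V^{\otimes m}}\rangle^k=\langle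 S\otimes\mathrm{id}_{V^{\otimes m}},\mathrm{id}_{V^{\otimes m}}\otimes S\rangle^k$. Extra-confluent: side-confluent, $X$ finite, and $(V^{\otimes n}\otimes\overline R)\cap(\overline R\otimes V^{\otimes n})\subset V^{\otimes n-1}\otimes\overline R\otimes V$ for $2\leq n\leq N-1$. $S_i^{(m)}=\mathrm{id}_{V^{\otimes i}}\otimes S\otimes\mathrm{id}_{V^{\otimes m-N-i}}$ for $0\leq i\leq m-N$. A reduction operator relatively to $X^{(m)}$ is a linear projector $T$ of $V^{\otimes m}$ with each $T(w)$ equal to $w$ or a combination of words $<w$; the unique one with kernel $W$ is $\theta_{X^{(m)}}^{-1}(W)$; $T_1\wedge T_2=\theta^{-1}(\ker T_1+\ker T_2)$, $T_1\vee T_2=\theta^{-1}(\ker T_1\cap\ker T_2)$ (associative). *)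

theory Defs
  imports Main
begin

text \<open>Words over a finite totally ordered alphabet 'x are lists; a vector of
  V^(tensor m) = K X^(m) is a coefficient function on words supported on words of length m.
  A linear endomorphism of V^(tensor m) is given by its matrix T w u
  (= coefficient of the word u in T(w)), vanishing unless both words have length m.\<close>

definition Vm :: "nat \<Rightarrow> ('x list \<Rightarrow> 'k::field) set" where
  "Vm m = {v. \<forall>u. v u \<noteq> 0 \<longrightarrow> length u = m}"

definition delta :: "'x list \<Rightarrow> 'x list \<Rightarrow> 'k::field" where
  "delta w = (\<lambda>u. if u = w then 1 else 0)"

definition lin_span :: "('x list \<Rightarrow> 'k::field) set \<Rightarrow> ('x list \<Rightarrow> 'k) set" where
  "lin_span A = {v. \<exists>F c. finite F \<and> F \<subseteq> A \<and> v = (\<lambda>u. \<Sum>f\<in>F. c f * f u)}"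

definition lexless :: "'x::linorder list \<Rightarrow> 'x list \<Rightarrow> bool" where
  "lexless u w \<longleftrightarrow> (\<exists>p a b s t. u = p @ a # s \<and> w = p @ b # t \<and> a < b)"

definition lm :: "('x::linorder list \<Rightarrow> 'k::field) \<Rightarrow> 'x list" where
  "lm f = (THE w. f w \<noteq> 0 \<and> (\<forall>u. f u \<noteq> 0 \<longrightarrow> u = w \<or> lexless u w))"

definition is_factor :: "'x list \<Rightarrow> 'x list \<Rightarrow> bool" where
  "is_factor v w \<longleftrightarrow> (\<exists>p s. w = p @ v @ s)"

definition normal_form :: "('x::linorder list \<Rightarrow> 'k::field) set \<Rightarrow> 'x list \<Rightarrow> bool" where
  "normal_form R u \<longleftrightarrow> (\<forall>f\<in>R. \<not> is_factor (lm f) u)"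

definition reduced_hom_pres :: "nat \<Rightarrow> ('x::linorder list \<Rightarrow> 'k::field) set \<Rightarrow> bool" where
  "reduced_hom_pres N R \<longleftrightarrow> R \<subseteq> Vm N \<and>
     (\<forall>f\<in>R. f \<noteq> (\<lambda>_. 0) \<and> f (lm f) = 1 \<and>
        (\<forall>u. u \<noteq> lm f \<and> f u \<noteq> 0 \<longrightarrow> normal_form R u) \<and>
        (\<forall>g\<in>R. g \<noteq> f \<longrightarrow> \<not> is_factor (lm g) (lm f)))"

definition S_op :: "nat \<Rightarrow> ('x::linorder list \<Rightarrow> 'k::field) set \<Rightarrow> 'x list \<Rightarrow> 'x list \<Rightarrow> 'k" where
  "S_op N R w u = (if length w = N \<and> length u = N then
      (if \<exists>f\<in>R. lm f = w then delta w u - (SOME f. f \<in> R \<and> lm f = w) u else delta w u)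
    else 0)"

definition idop :: "nat \<Rightarrow> 'x list \<Rightarrow> 'x list \<Rightarrow> 'k::field" where
  "idop m w u = (if length w = m \<and> u = w then 1 else 0)"

text \<open>composition A \<circ> B of endomorphisms of V^(tensor m)\<close>
definition comp :: "nat \<Rightarrow> ('x list \<Rightarrow> 'x list \<Rightarrow> 'k::field) \<Rightarrow> ('x list \<Rightarrow> 'x list \<Rightarrow> 'k)
    \<Rightarrow> 'x list \<Rightarrow> 'x list \<Rightarrow> 'k" where
  "comp m A B w u = (\<Sum>y\<in>{y. length y = m}. B w y * A y u)"

definition apply_op :: "nat \<Rightarrow> ('x list \<Rightarrow> 'x list \<Rightarrow> 'k::field) \<Rightarrow> ('x list \<Rightarrow> 'k) \<Rightarrow> 'x list \<Rightarrow> 'k" where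
  "apply_op m T v = (\<lambda>u. \<Sum>w\<in>{w. length w = m}. v w * T w u)"

text \<open>id_{V^(tensor a)} \<otimes> T \<otimes> id_{V^(tensor b)}, for T an endomorphism of V^(tensor n)\<close>
definition embed :: "nat \<Rightarrow> nat \<Rightarrow> nat \<Rightarrow> ('x list \<Rightarrow> 'x list \<Rightarrow> 'k::field)
    \<Rightarrow> 'x list \<Rightarrow> 'x list \<Rightarrow> 'k" where
  "embed a n b T w u = (if length w = a + n + b \<and> length u = a + n + b \<and>
      take a u = take a w \<and> drop (a + n) u = drop (a + n) w
    then T (take n (drop a w)) (take n (drop a u)) else 0)"

text \<open>\<langle>t,s\<rangle>^k = ... s t s (k factors)\<close>
fun braid :: "nat \<Rightarrow> ('x list \<Rightarrow> 'x list \<Rightarrow> 'k::field) \<Rightarrow> ('x list \<Rightarrow> 'x list \<Rightarrow> 'k)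
    \<Rightarrow> nat \<Rightarrow> 'x list \<Rightarrow> 'x list \<Rightarrow> 'k" where
  "braid n t s 0 = idop n"
| "braid n t s (Suc k) = comp n (braid n s t k) s"

definition side_confluent :: "nat \<Rightarrow> ('x::linorder list \<Rightarrow> 'k::field) set \<Rightarrow> bool" where
  "side_confluent N R \<longleftrightarrow> (\<forall>j. 1 \<le> j \<and> j \<le> N - 1 \<longrightarrow>
     (\<exists>k\<ge>1. braid (N + j) (embed j N 0 (S_op N R)) (embed 0 N j (S_op N R)) k
          = braid (N + j) (embed 0 N j (S_op N R)) (embed j N 0 (S_op N R)) k))"

text \<open>p \<otimes> w \<otimes> s for words p, s and a vector w\<close>
definition tens :: "'x list \<Rightarrow> ('x list \<Rightarrow> 'k::field) \<Rightarrow> 'x list \<Rightarrow> 'x list \<Rightarrow> 'k" where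
  "tens p w s = (\<lambda>u. if length p + length s \<le> length u \<and> take (length p) u = p
       \<and> drop (length u - length s) u = s
     then w (drop (length p) (take (length u - length s) u)) else 0)"

text \<open>V^(tensor a) \<otimes> W \<otimes> V^(tensor b)\<close>
definition tens_sub :: "nat \<Rightarrow> ('x list \<Rightarrow> 'k::field) set \<Rightarrow> nat \<Rightarrow> ('x list \<Rightarrow> 'k) set" where
  "tens_sub a W b = lin_span {tens p w s | p w s. length p = a \<and> w \<in> W \<and> length s = b}"

definition extra_confluent :: "nat \<Rightarrow> ('x::{linorder,finite} list \<Rightarrow> 'k::field) set \<Rightarrow> bool" where
  "extra_confluent N R \<longleftrightarrow> side_confluent N R \<and>
     (\<forall>n. 2 \<le> n \<and> n \<le> N - 1 \<longrightarrow>
        tens_sub n (lin_span R) 0 \<inter> tens_sub 0 (lin_span R) n \<subseteq> tens_sub (n - 1) (lin_span R) 1)"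

definition Sm :: "nat \<Rightarrow> ('x::linorder list \<Rightarrow> 'k::field) set \<Rightarrow> nat \<Rightarrow> nat \<Rightarrow> 'x list \<Rightarrow> 'x list \<Rightarrow> 'k" where
  "Sm N R m i = embed i N (m - N - i) (S_op N R)"

definition red_op :: "nat \<Rightarrow> ('x::linorder list \<Rightarrow> 'x list \<Rightarrow> 'k::field) \<Rightarrow> bool" where
  "red_op m T \<longleftrightarrow> (\<forall>w u. T w u \<noteq> 0 \<longrightarrow> length w = m \<and> length u = m) \<and>
     comp m T T = T \<and>
     (\<forall>w. length w = m \<longrightarrow> T w = delta w \<or> (\<forall>u. T w u \<noteq> 0 \<longrightarrow> lexless u w))"

definition ker_op :: "nat \<Rightarrow> ('x list \<Rightarrow> 'x list \<Rightarrow> 'k::field) \<Rightarrow> ('x list \<Rightarrow> 'k) set" where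
  "ker_op m T = {v \<in> Vm m. apply_op m T v = (\<lambda>_. 0)}"

definition theta_inv :: "nat \<Rightarrow> ('x::linorder list \<Rightarrow> 'k::field) set \<Rightarrow> 'x list \<Rightarrow> 'x list \<Rightarrow> 'k" where
  "theta_inv m W = (THE T. red_op m T \<and> ker_op m T = W)"

definition wedge :: "nat \<Rightarrow> ('x::linorder list \<Rightarrow> 'x list \<Rightarrow> 'k::field) \<Rightarrow> ('x list \<Rightarrow> 'x list \<Rightarrow> 'k)
    \<Rightarrow> 'x list \<Rightarrow> 'x list \<Rightarrow> 'k" where
  "wedge m T1 T2 = theta_inv m {(\<lambda>u. v1 u + v2 u) | v1 v2. v1 \<in> ker_op m T1 \<and> v2 \<in> ker_op m T2}"

definition vee :: "nat \<Rightarrow> ('x::linorder list \<Rightarrow> 'x list \<Rightarrow> 'k::field) \<Rightarrow> ('x list \<Rightarrow> 'x list \<Rightarrow> 'k)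
    \<Rightarrow> 'x list \<Rightarrow> 'x list \<Rightarrow> 'k" where
  "vee m T1 T2 = theta_inv m (ker_op m T1 \<inter> ker_op m T2)"

text \<open>iterated operations T1 op T2 op ... op Tn (the operations are associative)\<close>
fun vee_list :: "nat \<Rightarrow> ('x::linorder list \<Rightarrow> 'x list \<Rightarrow> 'k::field) list \<Rightarrow> 'x list \<Rightarrow> 'x list \<Rightarrow> 'k" where
  "vee_list m [] = undefined"
| "vee_list m (T # Ts) = foldl (vee m) T Ts"

fun wedge_list :: "nat \<Rightarrow> ('x::linorder list \<Rightarrow> 'x list \<Rightarrow> 'k::field) list \<Rightarrow> 'x list \<Rightarrow> 'x list \<Rightarrow> 'k" where
  "wedge_list m [] = undefined"
| "wedge_list m (T # Ts) = foldl (wedge m) T Ts"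

end

theory Submission
  imports Defs "HOL-Library.List_Lexorder"
begin

text \<open>
  The kernel of \<open>T \<or> T'\<close> is \<open>ker T \<inter> ker T'\<close>, that of \<open>T \<and> T'\<close> is \<open>ker T + ker T'\<close>, and a
  reduction operator is determined by its kernel. So both identities are statements about the
  kernels of the operators \<open>S_i = S_i^(m)\<close>, which are \<open>V^i \<otimes> span R \<otimes> V^(m-N-i)\<close>.

  (1) Tensoring the inclusion in the definition of extra-confluence gives
  \<open>ker S_i \<inter> ker S_(i+d) \<subseteq> ker S_(i+d-1)\<close> for \<open>2 \<le> d \<le> N - 1\<close>; iterating, \<open>ker S_r \<inter> ker S_(r+k)\<close>
  lies in every \<open>ker S_(r+j)\<close>.

  (2) By side-confluence the operators \<open>S_r, \<dots>, S_(r+k)\<close> satisfy pairwise braid relations, so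
  reducing with them is confluent. Hence the leading word \<open>w\<close> of a nonzero vector of
  \<open>ker S_r + \<dots> + ker S_(r+k-1)\<close> is reducible by some \<open>S_i\<close> with \<open>i < r + k\<close>, and two operators
  reducing \<open>w\<close> have a common kernel vector with leading word \<open>w\<close>. If the vector also lies in
  \<open>ker S_(r+k)\<close>, combining this with (1) produces a vector of \<open>ker S_(r+k-1) \<inter> ker S_(r+k)\<close> with
  leading word \<open>w\<close>; subtracting a multiple of it and inducting on the leading word shows
  \<open>(ker S_r + \<dots> + ker S_(r+k-1)) \<inter> ker S_(r+k) = ker S_(r+k-1) \<inter> ker S_(r+k)\<close>.
\<close>

section \<open>Words, vectors and linear operators\<close>

lemma lexless_iff_less:
  fixes u w :: "'x::linorder list"
  assumes "length u = length w"
  shows "lexless u w \<longleftrightarrow> u < w"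
proof
  assume "lexless u w" then show "u < w"
    unfolding lexless_def list_less_def lexord_def by blast
next
  assume "u < w"
  then have "(u, w) \<in> lexord {(a, b). a < b}" by (simp add: list_less_def)
  then show "lexless u w" using assms unfolding lexless_def lexord_def by auto
qed

lemma finite_words: "finite {w::'x::finite list. length w = m}"
  using finite_lists_length_eq[of "UNIV::'x set" m] by simp

lemma finite_words_less: "finite {u::'x::finite list. length u = m \<and> P u}"
  by (rule finite_subset[OF _ finite_words[of m]]) auto

lemma words_less_induct [consumes 1, case_names less]:
  fixes P :: "'x::{finite,linorder} list \<Rightarrow> bool"
  assumes "length w = m"
    and "\<And>w. length w = m \<Longrightarrow> (\<And>u. length u = m \<Longrightarrow> u < w \<Longrightarrow> P u) \<Longrightarrow> P w"
  shows "P w"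
  using assms(1)
proof (induction "card {u::'x list. length u = m \<and> u < w}" arbitrary: w rule: less_induct)
  case less
  show ?case
  proof (rule assms(2)[OF less.prems])
    fix u :: "'x list" assume u: "length u = m" "u < w"
    have "card {v. length v = m \<and> v < u} < card {v::'x list. length v = m \<and> v < w}"
      by (rule psubset_card_mono[OF finite_words_less]) (use u in auto)
    then show "P u" using less.hyps u by blast
  qed
qed

definition word_subspace :: "nat \<Rightarrow> ('x list \<Rightarrow> 'k::field) set \<Rightarrow> bool" where
  "word_subspace m W \<longleftrightarrow> W \<subseteq> Vm m \<and> (\<lambda>_. 0) \<in> W \<and> (\<forall>a\<in>W. \<forall>b\<in>W. (\<lambda>u. a u + b u) \<in> W)
     \<and> (\<forall>c. \<forall>a\<in>W. (\<lambda>u. c * a u) \<in> W)"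

definition is_endo :: "nat \<Rightarrow> ('x list \<Rightarrow> 'x list \<Rightarrow> 'k::field) \<Rightarrow> bool" where
  "is_endo m T \<longleftrightarrow> (\<forall>w u. T w u \<noteq> 0 \<longrightarrow> length w = m \<and> length u = m)"

definition supp_le :: "nat \<Rightarrow> 'x::linorder list \<Rightarrow> ('x list \<Rightarrow> 'k::field) \<Rightarrow> bool" where
  "supp_le m w v \<longleftrightarrow> v \<in> Vm m \<and> (\<forall>u. v u \<noteq> 0 \<longrightarrow> u \<le> w)"

definition supp_less :: "nat \<Rightarrow> 'x::linorder list \<Rightarrow> ('x list \<Rightarrow> 'k::field) \<Rightarrow> bool" where
  "supp_less m w v \<longleftrightarrow> v \<in> Vm m \<and> (\<forall>u. v u \<noteq> 0 \<longrightarrow> u < w)"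

lemma word_subspace_zero: "word_subspace m W \<Longrightarrow> (\<lambda>_. 0) \<in> W"
  by (simp add: word_subspace_def)

lemma word_subspace_add: "word_subspace m W \<Longrightarrow> a \<in> W \<Longrightarrow> b \<in> W \<Longrightarrow> (\<lambda>u. a u + b u) \<in> W"
  by (simp add: word_subspace_def)

lemma word_subspace_smult: "word_subspace m W \<Longrightarrow> a \<in> W \<Longrightarrow> (\<lambda>u. c * a u) \<in> W"
  by (simp add: word_subspace_def)

lemma word_subspace_imp_Vm: "word_subspace m W \<Longrightarrow> a \<in> W \<Longrightarrow> a \<in> Vm m"
  by (auto simp add: word_subspace_def)

lemma word_subspace_diff:
  assumes "word_subspace m W" "a \<in> W" "b \<in> W"
  shows "(\<lambda>u. a u - b u) \<in> W"
  using word_subspace_add[OF assms(1,2) word_subspace_smult[OF assms(1,3), of "-1"]] by simp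

lemma word_subspace_lincomb:
  assumes "word_subspace m W" "finite F" "\<And>y. y \<in> F \<Longrightarrow> f y \<in> W"
  shows "(\<lambda>u. \<Sum>y\<in>F. c y * f y u) \<in> W"
  using assms(2,3)
proof (induction F rule: finite_induct)
  case empty then show ?case using word_subspace_zero[OF assms(1)] by simp
next
  case (insert y F)
  have "(\<lambda>u. c y * f y u) \<in> W" using insert word_subspace_smult[OF assms(1)] by blast
  from word_subspace_add[OF assms(1) this insert.IH] insert show ?case by simp
qed

lemma word_subspace_sum:
  assumes "word_subspace m W" "finite F" "\<And>y. y \<in> F \<Longrightarrow> f y \<in> W"
  shows "(\<lambda>u. \<Sum>y\<in>F. f y u) \<in> W"
  using word_subspace_lincomb[OF assms, where c = "\<lambda>_. 1"] by simp

lemma word_subspace_Vm: "word_subspace m (Vm m)"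
  unfolding word_subspace_def Vm_def by (auto; metis add.left_neutral)

lemma word_subspace_Int: "word_subspace m A \<Longrightarrow> word_subspace m B \<Longrightarrow> word_subspace m (A \<inter> B)"
  by (auto simp add: word_subspace_def)

lemma delta_self [simp]: "delta w w = 1"
  by (simp add: delta_def)

lemma delta_Vm: "length w = m \<Longrightarrow> delta w \<in> Vm m"
  by (auto simp: Vm_def delta_def)

lemma Vm_delta_expansion:
  fixes v :: "'x::finite list \<Rightarrow> 'k::field"
  assumes "v \<in> Vm m"
  shows "v = (\<lambda>u. \<Sum>w\<in>{w. length w = m}. v w * delta w u)"
proof
  fix u
  have "(\<Sum>w\<in>{w. length w = m}. v w * delta w u) = (\<Sum>w\<in>{w. length w = m}. if w = u then v u else 0)"
    by (rule sum.cong) (auto simp: delta_def)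
  also have "\<dots> = v u"
    using assms by (auto simp: Vm_def sum.delta[OF finite_words])
  finally show "v u = (\<Sum>w\<in>{w. length w = m}. v w * delta w u)" by simp
qed

lemma obtain_lead_word:
  fixes v :: "'x::{finite,linorder} list \<Rightarrow> 'k::field"
  assumes "v \<in> Vm m" "v \<noteq> (\<lambda>_. 0)"
  obtains w where "length w = m" "v w \<noteq> 0" "supp_le m w v"
proof -
  let ?S = "{u. v u \<noteq> 0}"
  have fin: "finite ?S"
    using assms(1) by (auto simp: Vm_def intro: finite_subset[OF _ finite_words[of m]])
  have ne: "?S \<noteq> {}" using assms(2) by auto
  have "Max ?S \<in> ?S" "\<forall>u. v u \<noteq> 0 \<longrightarrow> u \<le> Max ?S"
    using Max_in[OF fin ne] Max_ge[OF fin] by auto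
  then show ?thesis using that assms(1) by (auto simp: supp_le_def Vm_def)
qed

lemma lead_word_induct [consumes 1, case_names zero lead]:
  fixes x :: "'x::{finite,linorder} list \<Rightarrow> 'k::field"
  assumes "x \<in> Vm m"
    and zero: "P (\<lambda>_. 0)"
    and lead: "\<And>x w. length w = m \<Longrightarrow> supp_le m w x \<Longrightarrow> x w \<noteq> 0
      \<Longrightarrow> (\<And>x'. supp_less m w x' \<Longrightarrow> P x') \<Longrightarrow> P x"
  shows "P x"
proof -
  have below: "P x'" if "length w = m" "supp_less m w x'" for w x'
    using that
  proof (induction w arbitrary: x' rule: words_less_induct)
    case (less w)
    show ?case
    proof (cases "x' = (\<lambda>_. 0)")
      case False
      obtain w' where w': "length w' = m" "x' w' \<noteq> 0" "supp_le m w' x'"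
        using obtain_lead_word[OF _ False] less(3) by (auto simp: supp_less_def)
      have "w' < w" using less(3) w'(2) by (simp add: supp_less_def)
      then show ?thesis using lead[OF w'(1,3,2)] less(2)[OF w'(1)] by blast
    qed (simp add: zero)
  qed
  show ?thesis
  proof (cases "x = (\<lambda>_. 0)")
    case False
    then obtain w where "length w = m" "x w \<noteq> 0" "supp_le m w x"
      using obtain_lead_word assms(1) by blast
    then show ?thesis using lead below by blast
  qed (simp add: zero)
qed

lemma apply_op_delta:
  fixes w :: "'x::finite list"
  assumes "length w = m"
  shows "apply_op m T (delta w) = T w"
proof
  fix u
  have "apply_op m T (delta w) u = (\<Sum>y\<in>{y. length y = m}. if y = w then T w u else 0)"
    unfolding apply_op_def by (rule sum.cong) (auto simp: delta_def)
  also have "\<dots> = T w u" using assms by (simp add: sum.delta[OF finite_words])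
  finally show "apply_op m T (delta w) u = T w u" .
qed

lemma apply_op_nonzeroE:
  assumes "apply_op m T v u \<noteq> 0"
  obtains y where "length y = m" "v y \<noteq> 0" "T y u \<noteq> 0"
proof -
  obtain y where "y \<in> {y. length y = m}" "v y * T y u \<noteq> 0"
    using sum.not_neutral_contains_not_neutral[OF assms[unfolded apply_op_def]] by blast
  then show ?thesis using that by simp
qed

lemma apply_op_Vm: "is_endo m T \<Longrightarrow> apply_op m T v \<in> Vm m"
  unfolding Vm_def is_endo_def by (blast elim: apply_op_nonzeroE)

lemma apply_op_sum:
  assumes "finite F"
  shows "apply_op m T (\<lambda>u. \<Sum>y\<in>F. f y u) = (\<lambda>u. \<Sum>y\<in>F. apply_op m T (f y) u)"
  unfolding apply_op_def by (auto simp: sum_distrib_right intro!: ext sum.swap)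

lemma apply_op_add:
  "apply_op m T (\<lambda>u. a u + b u) = (\<lambda>u. apply_op m T a u + apply_op m T b u)"
  unfolding apply_op_def by (auto simp: distrib_right sum.distrib intro!: ext)

lemma apply_op_diff:
  "apply_op m T (\<lambda>u. a u - b u) = (\<lambda>u. apply_op m T a u - apply_op m T b u)"
  unfolding apply_op_def by (auto simp: left_diff_distrib sum_subtractf intro!: ext)

lemma apply_op_smult:
  "apply_op m T (\<lambda>u. c * a u) = (\<lambda>u. c * apply_op m T a u)"
  unfolding apply_op_def by (auto simp: sum_distrib_left mult.assoc intro!: ext)

lemma apply_op_zero: "apply_op m T (\<lambda>_. 0) = (\<lambda>_. 0)"
  unfolding apply_op_def by simp

lemma apply_op_comp: "apply_op m (comp m A B) v = apply_op m A (apply_op m B v)"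
  unfolding apply_op_def comp_def
  by (auto simp: sum_distrib_left sum_distrib_right mult.assoc intro!: ext sum.swap)

lemma comp_row: "length w = m \<Longrightarrow> comp m A B w = apply_op m A (B w)"
  unfolding comp_def apply_op_def by simp

lemma apply_op_fixed_on_supp:
  fixes v :: "'x::finite list \<Rightarrow> 'k::field"
  assumes v: "v \<in> Vm m" and fixed: "\<And>y. v y \<noteq> 0 \<Longrightarrow> T y = delta y"
  shows "apply_op m T v = v"
proof
  fix u
  have "v y * T y u = v y * delta y u" for y
    by (cases "v y = 0") (simp_all add: fixed)
  then have "apply_op m T v u = (\<Sum>y\<in>{y. length y = m}. v y * delta y u)"
    unfolding apply_op_def by (rule sum.cong[OF refl])
  also have "\<dots> = v u" using fun_cong[OF Vm_delta_expansion[OF v], of u] by simp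
  finally show "apply_op m T v u = v u" .
qed

lemma comp_idem_if_rows_fixed:
  fixes T :: "'x::finite list \<Rightarrow> 'x list \<Rightarrow> 'k::field"
  assumes T: "is_endo m T" and fixed: "\<And>w y. T w y \<noteq> 0 \<Longrightarrow> T y = delta y"
  shows "comp m T T = T"
proof (intro ext)
  fix w u
  show "comp m T T w u = T w u"
  proof (cases "length w = m")
    case False
    then have "T w = (\<lambda>_. 0)" using T by (auto simp: is_endo_def)
    then show ?thesis by (simp add: comp_def)
  next
    case True
    have "T w \<in> Vm m" using T by (auto simp: Vm_def is_endo_def)
    then have "apply_op m T (T w) = T w" by (rule apply_op_fixed_on_supp) (rule fixed)
    then show ?thesis by (simp add: comp_row[OF True])
  qed
qed

lemma word_subspace_ker: "word_subspace m (ker_op m T)"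
  unfolding word_subspace_def ker_op_def
  using word_subspace_Vm[of m]
  by (auto simp: apply_op_add apply_op_smult apply_op_zero word_subspace_def)

lemma red_op_is_endo: "red_op m T \<Longrightarrow> is_endo m T"
  by (simp add: red_op_def is_endo_def)

lemma red_op_idem: "red_op m T \<Longrightarrow> comp m T T = T"
  by (simp add: red_op_def)

lemma red_op_row_less:
  fixes T :: "'x::linorder list \<Rightarrow> 'x list \<Rightarrow> 'k::field"
  assumes "red_op m T" "length w = m" "T w \<noteq> delta w" "T w u \<noteq> 0"
  shows "u < w"
proof -
  have "lexless u w" using assms unfolding red_op_def by blast
  moreover have "length u = m" using assms(1,4) by (simp add: red_op_def)
  ultimately show ?thesis using lexless_iff_less assms(2) by metis
qed

lemma red_op_row_supp_less:
  fixes T :: "'x::linorder list \<Rightarrow> 'x list \<Rightarrow> 'k::field"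
  assumes "red_op m T" "length w = m" "T w \<noteq> delta w"
  shows "supp_less m w (T w)"
  using red_op_row_less[OF assms] red_op_is_endo[OF assms(1)]
  by (auto simp: supp_less_def is_endo_def Vm_def)

lemma red_op_row_ker:
  fixes T :: "'x::{finite,linorder} list \<Rightarrow> 'x list \<Rightarrow> 'k::field"
  assumes T: "red_op m T" and lw: "length w = m"
  shows "(\<lambda>u. delta w u - T w u) \<in> ker_op m T"
proof -
  have "apply_op m T (\<lambda>u. delta w u - T w u) = (\<lambda>u. T w u - comp m T T w u)"
    using apply_op_diff[of m T "delta w" "T w"] apply_op_delta[OF lw, of T] comp_row[OF lw, of T T]
    by simp
  also have "\<dots> = (\<lambda>_. 0)" using red_op_idem[OF T] by simp
  finally have "apply_op m T (\<lambda>u. delta w u - T w u) = (\<lambda>_. 0)" .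
  moreover have "T w \<in> Vm m"
    using apply_op_Vm[OF red_op_is_endo[OF T], of "delta w"] apply_op_delta[OF lw, of T] by simp
  then have "(\<lambda>u. delta w u - T w u) \<in> Vm m"
    using word_subspace_diff[OF word_subspace_Vm delta_Vm[OF lw]] by blast
  ultimately show ?thesis by (simp add: ker_op_def)
qed

lemma red_op_apply_fixed:
  fixes T :: "'x::{finite,linorder} list \<Rightarrow> 'x list \<Rightarrow> 'k::field"
  assumes T: "red_op m T" and lw: "length w = m" and Tw: "T w = delta w" and x: "supp_le m w x"
  shows "apply_op m T x w = x w"
proof -
  have "x y * T y w = (if y = w then x w else 0)" if "length y = m" for y
  proof (cases "y = w \<or> x y = 0")
    case False
    then have "y < w" using x by (auto simp: supp_le_def)
    have "T y w = 0"
    proof (cases "T y = delta y")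
      case True then show ?thesis using \<open>y < w\<close> by (simp add: delta_def)
    next
      case False then show ?thesis using red_op_row_less[OF T that False, of w] \<open>y < w\<close> by auto
    qed
    then show ?thesis using False by simp
  qed (use Tw in auto)
  then have "apply_op m T x w = (\<Sum>y\<in>{y. length y = m}. if y = w then x w else 0)"
    unfolding apply_op_def by (intro sum.cong) auto
  also have "\<dots> = x w" using lw by (simp add: sum.delta[OF finite_words])
  finally show ?thesis .
qed

lemma red_op_lead_reducible:
  fixes T :: "'x::{finite,linorder} list \<Rightarrow> 'x list \<Rightarrow> 'k::field"
  assumes "red_op m T" "length w = m" "x \<in> ker_op m T" "supp_le m w x" "x w \<noteq> 0"
  shows "T w \<noteq> delta w"
  using red_op_apply_fixed[OF assms(1,2) _ assms(4)] assms(3,5) by (auto simp: ker_op_def)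

lemma red_op_row_cases:
  fixes T :: "'x::linorder list \<Rightarrow> 'x list \<Rightarrow> 'k::field"
  assumes "red_op m T" "length w = m"
  shows "T w = delta w \<or> (\<forall>u. T w u \<noteq> 0 \<longrightarrow> u < w)"
  using red_op_row_less[OF assms] by blast

section \<open>Reduction operators are determined by their kernels\<close>

definition lead_words :: "nat \<Rightarrow> ('x::linorder list \<Rightarrow> 'k::field) set \<Rightarrow> 'x list set" where
  "lead_words m W = {w. length w = m \<and> (\<exists>v\<in>W. supp_le m w v \<and> v w = 1)}"

definition is_reduct :: "nat \<Rightarrow> ('x::linorder list \<Rightarrow> 'k::field) set \<Rightarrow> 'x list \<Rightarrow> ('x list \<Rightarrow> 'k) \<Rightarrow> bool" where
  "is_reduct m W w n \<longleftrightarrow> n \<in> Vm m \<and> (\<forall>u. n u \<noteq> 0 \<longrightarrow> u \<le> w \<and> u \<notin> lead_words m W)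
     \<and> (\<lambda>u. delta w u - n u) \<in> W"

lemma eq_zero_if_no_lead_words:
  fixes W :: "('x::{finite,linorder} list \<Rightarrow> 'k::field) set"
  assumes W: "word_subspace m W" and v: "v \<in> W" and nl: "\<forall>u. v u \<noteq> 0 \<longrightarrow> u \<notin> lead_words m W"
  shows "v = (\<lambda>_. 0)"
proof (rule ccontr)
  assume "v \<noteq> (\<lambda>_. 0)"
  then obtain w where w: "length w = m" "v w \<noteq> 0" "supp_le m w v"
    using obtain_lead_word word_subspace_imp_Vm[OF W v] by blast
  define v' where "v' = (\<lambda>u. inverse (v w) * v u)"
  have "v' \<in> W" unfolding v'_def using word_subspace_smult[OF W v] .
  moreover have "supp_le m w v'" using w(3) unfolding supp_le_def v'_def Vm_def by auto
  moreover have "v' w = 1" using w(2) by (simp add: v'_def)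
  ultimately have "w \<in> lead_words m W" using w(1) by (auto simp: lead_words_def)
  then show False using nl w(2) by blast
qed

lemma is_reduct_unique:
  fixes W :: "('x::{finite,linorder} list \<Rightarrow> 'k::field) set"
  assumes W: "word_subspace m W" and "is_reduct m W w n" "is_reduct m W w n'"
  shows "n = n'"
proof -
  let ?d = "\<lambda>u. (delta w u - n' u) - (delta w u - n u)"
  have "?d \<in> W" by (rule word_subspace_diff[OF W]) (use assms(2,3) in \<open>simp_all add: is_reduct_def\<close>)
  moreover have "u \<notin> lead_words m W" if "?d u \<noteq> 0" for u
  proof -
    have "n u \<noteq> 0 \<or> n' u \<noteq> 0" using that by auto
    then show ?thesis using assms(2,3) by (auto simp: is_reduct_def)
  qed
  ultimately have "?d = (\<lambda>_. 0)" using eq_zero_if_no_lead_words[OF W] by blast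
  show ?thesis
  proof
    fix u show "n u = n' u" using fun_cong[OF \<open>?d = (\<lambda>_. 0)\<close>, of u] by (simp add: algebra_simps)
  qed
qed

lemma delta_is_reduct:
  "length w = m \<Longrightarrow> w \<notin> lead_words m W \<Longrightarrow> word_subspace m W \<Longrightarrow> is_reduct m W w (delta w)"
  using word_subspace_zero delta_Vm by (fastforce simp: is_reduct_def delta_def)

text \<open>A word that is the leading word of some v \<in> W reduces through v to smaller words.\<close>

lemma is_reduct_lead_word:
  fixes W :: "('x::{finite,linorder} list \<Rightarrow> 'k::field) set"
  assumes W: "word_subspace m W" and lw: "length w = m"
    and v: "v \<in> W" "supp_le m w v" "v w = 1"
    and nn: "\<And>u. length u = m \<Longrightarrow> u < w \<Longrightarrow> is_reduct m W u (nn u)"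
  defines "U \<equiv> {u. length u = m \<and> u < w}"
  shows "is_reduct m W w (\<lambda>t. \<Sum>u\<in>U. (delta w u - v u) * nn u t)"
proof -
  define d where "d = (\<lambda>u. delta w u - v u)"
  have finU: "finite U" unfolding U_def by (rule finite_words_less)
  have nnU: "\<And>u. u \<in> U \<Longrightarrow> is_reduct m W u (nn u)" using nn by (simp add: U_def)
  have dU: "u \<in> U" if "d u \<noteq> 0" for u
  proof -
    have "u \<noteq> w" "u \<le> w" "length u = m"
      using that v(2,3) lw by (auto simp: d_def delta_def supp_le_def Vm_def split: if_splits)
    then show ?thesis by (simp add: U_def)
  qed
  have d_exp: "d t = (\<Sum>u\<in>U. d u * delta u t)" for t
  proof -
    have "(\<Sum>u\<in>U. d u * delta u t) = (\<Sum>u\<in>U. if u = t then d t else 0)"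
      by (rule sum.cong) (auto simp: delta_def)
    also have "\<dots> = d t" using dU finU by (auto simp: sum.delta)
    finally show ?thesis by simp
  qed
  define n where "n = (\<lambda>t. \<Sum>u\<in>U. d u * nn u t)"
  have "n \<in> Vm m" unfolding n_def
    by (rule word_subspace_lincomb[OF word_subspace_Vm finU]) (use nnU in \<open>auto simp: is_reduct_def\<close>)
  moreover have "t \<le> w \<and> t \<notin> lead_words m W" if "n t \<noteq> 0" for t
  proof -
    obtain u where u: "u \<in> U" "nn u t \<noteq> 0"
      using \<open>n t \<noteq> 0\<close> unfolding n_def by (metis (mono_tags, lifting) mult_zero_right sum.neutral)
    then have "t \<le> u" "t \<notin> lead_words m W" using nnU[OF u(1)] by (auto simp: is_reduct_def)
    moreover have "u < w" using u(1) by (simp add: U_def)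
    ultimately show ?thesis by auto
  qed
  moreover have "(\<lambda>t. delta w t - n t) \<in> W"
  proof -
    have A: "(\<lambda>t. \<Sum>u\<in>U. d u * (delta u t - nn u t)) \<in> W"
      by (rule word_subspace_lincomb[OF W finU]) (use nnU in \<open>auto simp: is_reduct_def\<close>)
    have "(\<Sum>u\<in>U. d u * (delta u t - nn u t)) = d t - n t" for t
      by (simp add: d_exp[of t, symmetric] n_def right_diff_distrib sum_subtractf)
    then have "(\<lambda>t. delta w t - n t) = (\<lambda>t. v t + (\<Sum>u\<in>U. d u * (delta u t - nn u t)))"
      by (simp add: d_def)
    then show ?thesis using word_subspace_add[OF W v(1) A] by simp
  qed
  ultimately have "is_reduct m W w n" by (simp add: is_reduct_def)
  moreover have "n = (\<lambda>t. \<Sum>u\<in>U. (delta w u - v u) * nn u t)" by (simp add: n_def d_def)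
  ultimately show ?thesis by simp
qed

lemma reduct_exists:
  fixes W :: "('x::{finite,linorder} list \<Rightarrow> 'k::field) set"
  assumes W: "word_subspace m W" and lw: "length w = m"
  shows "\<exists>n. is_reduct m W w n"
  using lw
proof (induction w rule: words_less_induct)
  case (less w)
  show ?case
  proof (cases "w \<in> lead_words m W")
    case False
    then show ?thesis using delta_is_reduct[OF less(1) _ W] by blast
  next
    case True
    then obtain v where v: "v \<in> W" "supp_le m w v" "v w = 1" by (auto simp: lead_words_def)
    have "is_reduct m W u (SOME n. is_reduct m W u n)" if "length u = m" "u < w" for u
      using less(2)[OF that] by (rule someI_ex)
    from is_reduct_lead_word[OF W less(1) v this] show ?thesis by blast
  qed
qed

definition reduction_op :: "nat \<Rightarrow> ('x::linorder list \<Rightarrow> 'k::field) set \<Rightarrow> 'x list \<Rightarrow> 'x list \<Rightarrow> 'k" where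
  "reduction_op m W w = (if length w = m then (SOME n. is_reduct m W w n) else (\<lambda>_. 0))"

context
  fixes W :: "('x::{finite,linorder} list \<Rightarrow> 'k::field) set" and m :: nat
  assumes W: "word_subspace m W"
begin

lemma reduction_op_is_reduct: "length w = m \<Longrightarrow> is_reduct m W w (reduction_op m W w)"
  using someI_ex[OF reduct_exists[OF W]] by (simp add: reduction_op_def)

lemma reduction_op_eqI: "length w = m \<Longrightarrow> is_reduct m W w n \<Longrightarrow> reduction_op m W w = n"
  by (rule is_reduct_unique[OF W reduction_op_is_reduct])

lemma reduction_op_nonzeroD:
  assumes "reduction_op m W w u \<noteq> 0"
  shows "length w = m" "length u = m" "u \<le> w" "u \<notin> lead_words m W"
proof -
  show lw: "length w = m" using assms by (auto simp: reduction_op_def split: if_splits)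
  show "length u = m" "u \<le> w" "u \<notin> lead_words m W"
    using reduction_op_is_reduct[OF lw] assms by (auto simp: is_reduct_def Vm_def)
qed

lemma is_endo_reduction_op: "is_endo m (reduction_op m W)"
  using reduction_op_nonzeroD unfolding is_endo_def by blast

lemma reduction_op_idem: "comp m (reduction_op m W) (reduction_op m W) = reduction_op m W"
proof (rule comp_idem_if_rows_fixed[OF is_endo_reduction_op])
  fix w y assume "reduction_op m W w y \<noteq> 0"
  then show "reduction_op m W y = delta y"
    using reduction_op_nonzeroD reduction_op_eqI delta_is_reduct[OF _ _ W] by blast
qed

lemma red_op_reduction_op: "red_op m (reduction_op m W)"
  unfolding red_op_def
proof (intro conjI allI impI)
  fix w u assume "reduction_op m W w u \<noteq> 0"
  then show "length w = m" "length u = m" using reduction_op_nonzeroD by auto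
next
  show "comp m (reduction_op m W) (reduction_op m W) = reduction_op m W" by (rule reduction_op_idem)
next
  fix w :: "'x list" assume lw: "length w = m"
  show "reduction_op m W w = delta w \<or> (\<forall>u. reduction_op m W w u \<noteq> 0 \<longrightarrow> lexless u w)"
  proof (cases "w \<in> lead_words m W")
    case False then show ?thesis using reduction_op_eqI[OF lw delta_is_reduct[OF lw _ W]] by simp
  next
    case True
    have "lexless u w" if "reduction_op m W w u \<noteq> 0" for u
    proof -
      have "u \<le> w" "u \<noteq> w" "length u = m" using reduction_op_nonzeroD[OF that] True by auto
      then show ?thesis using lexless_iff_less[of u w] lw by simp
    qed
    then show ?thesis by blast
  qed
qed

lemma ker_reduction_op: "ker_op m (reduction_op m W) = W"
proof -
  have diff_in: "(\<lambda>u. v u - apply_op m (reduction_op m W) v u) \<in> W" if v: "v \<in> Vm m" for v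
  proof -
    have "v u - apply_op m (reduction_op m W) v u
        = (\<Sum>w\<in>{w. length w = m}. v w * (delta w u - reduction_op m W w u))" for u
      by (subst (1) Vm_delta_expansion[OF v]) (simp add: apply_op_def right_diff_distrib sum_subtractf)
    moreover have "(\<lambda>u. \<Sum>w\<in>{w. length w = m}. v w * (delta w u - reduction_op m W w u)) \<in> W"
      by (rule word_subspace_lincomb[OF W finite_words])
        (use reduction_op_is_reduct in \<open>simp add: is_reduct_def\<close>)
    ultimately show ?thesis by simp
  qed
  show ?thesis
  proof
    show "ker_op m (reduction_op m W) \<subseteq> W"
    proof
      fix v assume "v \<in> ker_op m (reduction_op m W)"
      then show "v \<in> W" using diff_in[of v] by (simp add: ker_op_def)
    qed
  next
    show "W \<subseteq> ker_op m (reduction_op m W)"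
    proof
      fix v assume vW: "v \<in> W"
      then have vV: "v \<in> Vm m" by (rule word_subspace_imp_Vm[OF W])
      have "(\<lambda>u. v u - (v u - apply_op m (reduction_op m W) v u)) \<in> W"
        using word_subspace_diff[OF W vW diff_in[OF vV]] .
      moreover have "u \<notin> lead_words m W" if "apply_op m (reduction_op m W) v u \<noteq> 0" for u
        using that by (rule apply_op_nonzeroE) (rule reduction_op_nonzeroD)
      ultimately have "apply_op m (reduction_op m W) v = (\<lambda>_. 0)"
        using eq_zero_if_no_lead_words[OF W] by simp
      then show "v \<in> ker_op m (reduction_op m W)" using vV by (simp add: ker_op_def)
    qed
  qed
qed

end

text \<open>Idempotence forces every word occurring in a row of a reduction operator to be fixed:
  otherwise the greatest non-fixed such word would be lost in the row of \<open>T \<circ> T\<close>.\<close>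

lemma red_op_row_fixed:
  fixes T :: "'x::{finite,linorder} list \<Rightarrow> 'x list \<Rightarrow> 'k::field"
  assumes T: "red_op m T" and Twy: "T w y \<noteq> 0"
  shows "T y = delta y"
proof (rule ccontr)
  assume "T y \<noteq> delta y"
  let ?Y = "{y. T w y \<noteq> 0 \<and> T y \<noteq> delta y}"
  have ne: "?Y \<noteq> {}" using Twy \<open>T y \<noteq> delta y\<close> by auto
  have fin: "finite ?Y"
    using red_op_is_endo[OF T] by (auto simp: is_endo_def intro: finite_subset[OF _ finite_words[of m]])
  define u0 where "u0 = Max ?Y"
  have u0: "T w u0 \<noteq> 0" "T u0 \<noteq> delta u0" using Max_in[OF fin ne] u0_def by auto
  have u0max: "\<And>y. T w y \<noteq> 0 \<Longrightarrow> T y \<noteq> delta y \<Longrightarrow> y \<le> u0"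
    using Max_ge[OF fin] u0_def by auto
  have "T w y * T y u0 = 0" if "length y = m" for y
  proof (cases "T w y = 0")
    case False
    show ?thesis
    proof (cases "T y = delta y")
      case True
      then have "y \<noteq> u0" using u0(2) by auto
      then show ?thesis using True by (simp add: delta_def)
    next
      case nf: False
      then have "y \<le> u0" using u0max False by blast
      then show ?thesis using red_op_row_less[OF T that nf, of u0] by auto
    qed
  qed simp
  then have "comp m T T w u0 = 0" unfolding comp_def by (intro sum.neutral) simp
  then show False using u0(1) red_op_idem[OF T] by simp
qed

lemma red_op_row_is_reduct:
  fixes T :: "'x::{finite,linorder} list \<Rightarrow> 'x list \<Rightarrow> 'k::field"
  assumes T: "red_op m T" and lw: "length w = m"
  shows "is_reduct m (ker_op m T) w (T w)"
  unfolding is_reduct_def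
proof (intro conjI allI impI)
  show "T w \<in> Vm m"
    using apply_op_Vm[OF red_op_is_endo[OF T], of "delta w"] apply_op_delta[OF lw, of T] by simp
  show "(\<lambda>u. delta w u - T w u) \<in> ker_op m T" by (rule red_op_row_ker[OF T lw])
next
  fix u assume Twu: "T w u \<noteq> 0"
  show "u \<le> w"
    using red_op_row_less[OF T lw _ Twu] Twu by (cases "T w = delta w") (auto simp: delta_def split: if_splits)
  show "u \<notin> lead_words m (ker_op m T)"
  proof
    assume "u \<in> lead_words m (ker_op m T)"
    then obtain v where "length u = m" "v \<in> ker_op m T" "supp_le m u v" "v u = 1"
      by (auto simp: lead_words_def)
    then show False using red_op_lead_reducible[OF T] red_op_row_fixed[OF T Twu] by force
  qed
qed

lemma red_op_eq_reduction_op: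
  fixes T :: "'x::{finite,linorder} list \<Rightarrow> 'x list \<Rightarrow> 'k::field"
  assumes T: "red_op m T"
  shows "T = reduction_op m (ker_op m T)"
proof (intro ext)
  fix w u
  show "T w u = reduction_op m (ker_op m T) w u"
  proof (cases "length w = m")
    case True then show ?thesis
      using reduction_op_eqI[OF word_subspace_ker True red_op_row_is_reduct[OF T True]] by simp
  next
    case False then show ?thesis
      using red_op_is_endo[OF T] by (auto simp: is_endo_def reduction_op_def)
  qed
qed

lemma red_op_eqI:
  fixes T1 :: "'x::{finite,linorder} list \<Rightarrow> 'x list \<Rightarrow> 'k::field"
  assumes "red_op m T1" "red_op m T2" "ker_op m T1 = ker_op m T2"
  shows "T1 = T2"
  using red_op_eq_reduction_op[OF assms(1)] red_op_eq_reduction_op[OF assms(2)] assms(3) by simp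

lemma theta_inv_char:
  fixes W :: "('x::{finite,linorder} list \<Rightarrow> 'k::field) set"
  assumes W: "word_subspace m W"
  shows "red_op m (theta_inv m W) \<and> ker_op m (theta_inv m W) = W"
proof -
  have "\<exists>!T. red_op m T \<and> ker_op m T = W"
  proof (rule ex1I[of _ "reduction_op m W"])
    show "red_op m (reduction_op m W) \<and> ker_op m (reduction_op m W) = W"
      using red_op_reduction_op[OF W] ker_reduction_op[OF W] by blast
  next
    fix T assume "red_op m T \<and> ker_op m T = W"
    then show "T = reduction_op m W" using red_op_eq_reduction_op by blast
  qed
  from theI'[OF this] show ?thesis unfolding theta_inv_def .
qed

definition plus_set :: "('x list \<Rightarrow> 'k::field) set \<Rightarrow> ('x list \<Rightarrow> 'k) set \<Rightarrow> ('x list \<Rightarrow> 'k) set" where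
  "plus_set A B = {(\<lambda>u. v1 u + v2 u) | v1 v2. v1 \<in> A \<and> v2 \<in> B}"

lemma plus_setI: "v1 \<in> A \<Longrightarrow> v2 \<in> B \<Longrightarrow> (\<lambda>u. v1 u + v2 u) \<in> plus_set A B"
  unfolding plus_set_def by blast

lemma word_subspace_plus_set:
  assumes A: "word_subspace m A" and B: "word_subspace m B"
  shows "word_subspace m (plus_set A B)"
  unfolding word_subspace_def
proof (intro conjI ballI allI subsetI)
  fix x assume "x \<in> plus_set A B"
  then show "x \<in> Vm m"
    using word_subspace_add[OF word_subspace_Vm word_subspace_imp_Vm[OF A] word_subspace_imp_Vm[OF B]]
    by (auto simp: plus_set_def)
next
  show "(\<lambda>_. 0) \<in> plus_set A B"
    using plus_setI[OF word_subspace_zero[OF A] word_subspace_zero[OF B]] by simp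
next
  fix a b assume "a \<in> plus_set A B" "b \<in> plus_set A B"
  then obtain a1 a2 b1 b2 where h: "a1 \<in> A" "a2 \<in> B" "a = (\<lambda>u. a1 u + a2 u)"
    "b1 \<in> A" "b2 \<in> B" "b = (\<lambda>u. b1 u + b2 u)" by (auto simp: plus_set_def)
  have "(\<lambda>u. a u + b u) = (\<lambda>u. (\<lambda>u. a1 u + b1 u) u + (\<lambda>u. a2 u + b2 u) u)"
    using h(3,6) by (auto simp: algebra_simps)
  then show "(\<lambda>u. a u + b u) \<in> plus_set A B"
    using plus_setI[OF word_subspace_add[OF A h(1,4)] word_subspace_add[OF B h(2,5)]] by simp
next
  fix c a assume "a \<in> plus_set A B"
  then obtain a1 a2 where h: "a1 \<in> A" "a2 \<in> B" "a = (\<lambda>u. a1 u + a2 u)" by (auto simp: plus_set_def)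
  have "(\<lambda>u. c * a u) = (\<lambda>u. (\<lambda>u. c * a1 u) u + (\<lambda>u. c * a2 u) u)"
    using h(3) by (auto simp: algebra_simps)
  then show "(\<lambda>u. c * a u) \<in> plus_set A B"
    using plus_setI[OF word_subspace_smult[OF A h(1)] word_subspace_smult[OF B h(2)]] by simp
qed

lemma ker_vee:
  fixes T1 :: "'x::{finite,linorder} list \<Rightarrow> 'x list \<Rightarrow> 'k::field"
  shows "ker_op m (vee m T1 T2) = ker_op m T1 \<inter> ker_op m T2"
  using theta_inv_char[OF word_subspace_Int[OF word_subspace_ker word_subspace_ker]]
  unfolding vee_def by blast

lemma ker_wedge:
  fixes T1 :: "'x::{finite,linorder} list \<Rightarrow> 'x list \<Rightarrow> 'k::field"
  shows "ker_op m (wedge m T1 T2) = plus_set (ker_op m T1) (ker_op m T2)"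
  using theta_inv_char[OF word_subspace_plus_set[OF word_subspace_ker word_subspace_ker]]
  unfolding wedge_def plus_set_def by blast

lemma red_op_vee:
  fixes T1 :: "'x::{finite,linorder} list \<Rightarrow> 'x list \<Rightarrow> 'k::field"
  shows "red_op m (vee m T1 T2)"
  using theta_inv_char[OF word_subspace_Int[OF word_subspace_ker word_subspace_ker]]
  unfolding vee_def by blast

section \<open>Tensoring with identities\<close>

lemma split_append2: "length w = i + j \<Longrightarrow> \<exists>x y. w = x @ y \<and> length x = i \<and> length y = j"
  by (rule exI[of _ "take i w"], rule exI[of _ "drop i w"]) simp

lemma split_append3: "length w = a + n + b \<Longrightarrow> \<exists>p y s. w = p @ y @ s \<and> length p = a \<and> length y = n \<and> length s = b"
proof -
  assume "length w = a + n + b"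
  then obtain p r where "w = p @ r" "length p = a" "length r = n + b" using split_append2[of w a "n+b"] by auto
  moreover obtain y s where "r = y @ s" "length y = n" "length s = b" using split_append2[OF calculation(3)] by auto
  ultimately show ?thesis by blast
qed

lemma sum_words_middle:
  fixes g :: "'x::finite list \<Rightarrow> 'k::comm_monoid_add"
  assumes lp: "length p = a" and ls: "length s = b"
    and vanish: "\<And>z. length z = a + n + b \<Longrightarrow> g z \<noteq> 0 \<Longrightarrow> take a z = p \<and> drop (a + n) z = s"
  shows "(\<Sum>z\<in>{z. length z = a + n + b}. g z) = (\<Sum>y\<in>{y. length y = n}. g (p @ y @ s))"
proof -
  have inj: "inj_on (\<lambda>y. p @ y @ s) {y. length y = n}" by (auto simp: inj_on_def)
  have "(\<Sum>y\<in>{y. length y = n}. g (p @ y @ s)) = (\<Sum>z\<in>(\<lambda>y. p @ y @ s) ` {y. length y = n}. g z)"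
    by (simp add: sum.reindex[OF inj])
  also have "\<dots> = (\<Sum>z\<in>{z. length z = a + n + b}. g z)"
  proof (rule sum.mono_neutral_left[OF finite_words])
    show "(\<lambda>y. p @ y @ s) ` {y. length y = n} \<subseteq> {z. length z = a + n + b}" using lp ls by auto
  next
    show "\<forall>z\<in>{z. length z = a + n + b} - (\<lambda>y. p @ y @ s) ` {y. length y = n}. g z = 0"
    proof
      fix z assume z: "z \<in> {z. length z = a + n + b} - (\<lambda>y. p @ y @ s) ` {y. length y = n}"
      show "g z = 0"
      proof (rule ccontr)
        assume "g z \<noteq> 0"
        then have td: "take a z = p" "drop (a + n) z = s" using vanish z by auto
        obtain p' y s' where d: "z = p' @ y @ s'" "length p' = a" "length y = n" "length s' = b"
          using split_append3 z by blast
        have "p' = p" "s' = s" using td d by auto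
        then have "z \<in> (\<lambda>y. p @ y @ s) ` {y. length y = n}" using d by auto
        then show False using z by blast
      qed
    qed
  qed
  finally show ?thesis by simp
qed

lemma embed_append:
  assumes "length p = a" "length y = n" "length s = b" "length p' = a" "length y' = n" "length s' = b"
  shows "embed a n b T (p @ y @ s) (p' @ y' @ s') = (if p' = p \<and> s' = s then T y y' else 0)"
  using assms by (auto simp: embed_def)

lemma embed_nonzeroD:
  assumes "embed a n b T w u \<noteq> 0"
  shows "length w = a + n + b \<and> length u = a + n + b \<and> take a u = take a w \<and> drop (a + n) u = drop (a + n) w"
  using assms by (auto simp: embed_def split: if_splits)

lemma is_endo_embed: "M = a + n + b \<Longrightarrow> is_endo M (embed a n b T)"
  unfolding is_endo_def using embed_nonzeroD by blast

lemma embed_comp: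
  fixes A :: "'x::finite list \<Rightarrow> 'x list \<Rightarrow> 'k::field"
  shows "embed a n b (comp n A B) = comp (a + n + b) (embed a n b A) (embed a n b B)"
proof (intro ext)
  fix w u
  show "embed a n b (comp n A B) w u = comp (a + n + b) (embed a n b A) (embed a n b B) w u"
  proof (cases "length w = a + n + b \<and> length u = a + n + b")
    case False
    then have "embed a n b (comp n A B) w u = 0" by (auto simp: embed_def)
    moreover have "comp (a + n + b) (embed a n b A) (embed a n b B) w u = 0"
      unfolding comp_def
    proof (rule sum.neutral, intro ballI)
      fix z
      show "embed a n b B w z * embed a n b A z u = 0"
        using False embed_nonzeroD[of a n b B w z] embed_nonzeroD[of a n b A z u] by auto
    qed
    ultimately show ?thesis by simp
  next
    case True
    obtain p y s where w: "w = p @ y @ s" "length p = a" "length y = n" "length s = b"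
      using split_append3 True by blast
    obtain p' y' s' where u: "u = p' @ y' @ s'" "length p' = a" "length y' = n" "length s' = b"
      using split_append3 True by blast
    have "comp (a + n + b) (embed a n b A) (embed a n b B) w u
        = (\<Sum>x\<in>{x. length x = n}. embed a n b B w (p @ x @ s) * embed a n b A (p @ x @ s) u)"
      unfolding comp_def
    proof (rule sum_words_middle[OF w(2) w(4)])
      fix z assume "length z = a + n + b" "embed a n b B w z * embed a n b A z u \<noteq> 0"
      then have "embed a n b B w z \<noteq> 0" by auto
      from embed_nonzeroD[OF this] show "take a z = p \<and> drop (a + n) z = s" using w by simp
    qed
    also have "\<dots> = (\<Sum>x\<in>{x. length x = n}. (if p' = p \<and> s' = s then B y x * A x y' else 0))"
      by (rule sum.cong) (use w u in \<open>auto simp: embed_append\<close>)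
    also have "\<dots> = embed a n b (comp n A B) w u"
      using w u by (auto simp: embed_append comp_def)
    finally show ?thesis by simp
  qed
qed

lemma embed_idop:
  "embed a n b (idop n) = idop (a + n + b)"
proof (intro ext)
  fix w u
  show "embed a n b (idop n) w u = idop (a + n + b) w u"
  proof (cases "length w = a + n + b \<and> length u = a + n + b")
    case False then show ?thesis by (auto simp: embed_def idop_def)
  next
    case True
    obtain p y s where w: "w = p @ y @ s" "length p = a" "length y = n" "length s = b"
      using split_append3 True by blast
    obtain p' y' s' where u: "u = p' @ y' @ s'" "length p' = a" "length y' = n" "length s' = b"
      using split_append3 True by blast
    show ?thesis using w u by (auto simp: embed_append idop_def)
  qed
qed

lemma embed_braid:
  fixes t :: "'x::finite list \<Rightarrow> 'x list \<Rightarrow> 'k::field"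
  shows "embed a n b (braid n t s k) = braid (a + n + b) (embed a n b t) (embed a n b s) k"
proof (induction k arbitrary: t s)
  case 0 then show ?case by (simp add: embed_idop)
next
  case (Suc k) then show ?case by (simp add: embed_comp)
qed

lemma embed_embed:
  "embed a (c + N + d) b (embed c N d S) = embed (a + c) N (d + b) S"
proof (intro ext)
  fix w u
  show "embed a (c + N + d) b (embed c N d S) w u = embed (a + c) N (d + b) S w u"
  proof (cases "length w = a + c + N + d + b \<and> length u = a + c + N + d + b")
    case False then show ?thesis by (auto simp: embed_def)
  next
    case True
    obtain p r where w1: "w = p @ r" "length p = a" "length r = c + N + d + b"
      using split_append2[of w a "c + N + d + b"] True by auto
    obtain q x s t where w2: "r = q @ x @ s @ t" "length q = c" "length x = N" "length s = d" "length t = b"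
    proof -
      obtain q r2 where "r = q @ r2" "length q = c" "length r2 = N + d + b" using split_append2[of r c "N+d+b"] w1 by auto
      moreover obtain x s t where "r2 = x @ s @ t" "length x = N" "length s = d" "length t = b"
        using split_append3[of r2 N d b] calculation by auto
      ultimately show ?thesis using that by blast
    qed
    obtain p' r' where u1: "u = p' @ r'" "length p' = a" "length r' = c + N + d + b"
      using split_append2[of u a "c + N + d + b"] True by auto
    obtain q' x' s' t' where u2: "r' = q' @ x' @ s' @ t'" "length q' = c" "length x' = N" "length s' = d" "length t' = b"
    proof -
      obtain q r2 where "r' = q @ r2" "length q = c" "length r2 = N + d + b" using split_append2[of r' c "N+d+b"] u1 by auto
      moreover obtain x s t where "r2 = x @ s @ t" "length x = N" "length s = d" "length t = b"
        using split_append3[of r2 N d b] calculation by auto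
      ultimately show ?thesis using that by blast
    qed
    show ?thesis using w1 w2 u1 u2 by (simp add: embed_def)
  qed
qed

lemma lexless_append_context:
  assumes "lexless y' y"
  shows "lexless (p @ y' @ s') (p @ y @ s)"
proof -
  obtain q c1 c2 r1 r2 where "y' = q @ c1 # r1" "y = q @ c2 # r2" "c1 < c2"
    using assms unfolding lexless_def by blast
  then show ?thesis unfolding lexless_def
    by (intro exI[of _ "p @ q"] exI[of _ c1] exI[of _ c2] exI[of _ "r1 @ s'"] exI[of _ "r2 @ s"]) simp
qed

lemma embed_row_delta:
  assumes "length p = a" "length y = n" "length s = b" "T y = delta y"
  shows "embed a n b T (p @ y @ s) = delta (p @ y @ s)"
proof
  fix u
  show "embed a n b T (p @ y @ s) u = delta (p @ y @ s) u"
  proof (cases "length u = a + n + b")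
    case False then show ?thesis using assms by (auto simp: embed_def delta_def)
  next
    case True
    obtain p' y' s' where u: "u = p' @ y' @ s'" "length p' = a" "length y' = n" "length s' = b"
      using split_append3 True by blast
    show ?thesis using assms u by (auto simp: embed_append delta_def)
  qed
qed

lemma red_op_embed:
  fixes T :: "'x::{finite,linorder} list \<Rightarrow> 'x list \<Rightarrow> 'k::field"
  assumes T: "red_op n T"
  shows "red_op (a + n + b) (embed a n b T)"
  unfolding red_op_def
proof (intro conjI allI impI)
  fix w u assume "embed a n b T w u \<noteq> 0"
  from embed_nonzeroD[OF this] show "length w = a + n + b" "length u = a + n + b" by auto
next
  show "comp (a + n + b) (embed a n b T) (embed a n b T) = embed a n b T"
    using embed_comp[of a n b T T] red_op_idem[OF T] by simp
next
  fix w :: "'x list" assume lw: "length w = a + n + b"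
  obtain p y s where w: "w = p @ y @ s" "length p = a" "length y = n" "length s = b"
    using split_append3 lw by blast
  show "embed a n b T w = delta w \<or> (\<forall>u. embed a n b T w u \<noteq> 0 \<longrightarrow> lexless u w)"
  proof (cases "T y = delta y")
    case True then show ?thesis using embed_row_delta[OF w(2-4), of T] True w(1) by simp
  next
    case False
    have "lexless u w" if ne: "embed a n b T w u \<noteq> 0" for u
    proof -
      have "length u = a + n + b" using embed_nonzeroD[OF ne] by blast
      then obtain p' y' s' where u: "u = p' @ y' @ s'" "length p' = a" "length y' = n" "length s' = b"
        using split_append3 by blast
      have "p' = p" "s' = s" "T y y' \<noteq> 0" using ne w u by (auto simp: embed_append split: if_splits)
      moreover have "lexless y' y" if "T y y' \<noteq> 0"
        using T w(3) False that unfolding red_op_def by blast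
      ultimately show ?thesis using lexless_append_context u(1) w(1) by blast
    qed
    then show ?thesis by blast
  qed
qed

definition slice :: "nat \<Rightarrow> 'x list \<Rightarrow> 'x list \<Rightarrow> ('x list \<Rightarrow> 'k::field) \<Rightarrow> 'x list \<Rightarrow> 'k" where
  "slice n p s v = (\<lambda>y. if length y = n then v (p @ y @ s) else 0)"

lemma slice_Vm: "slice n p s v \<in> Vm n" by (auto simp: slice_def Vm_def)

lemma apply_embed_append:
  fixes T :: "'x::finite list \<Rightarrow> 'x list \<Rightarrow> 'k::field"
  assumes "length p = a" "length u = n" "length s = b"
  shows "apply_op (a + n + b) (embed a n b T) v (p @ u @ s) = apply_op n T (slice n p s v) u"
proof -
  have "apply_op (a + n + b) (embed a n b T) v (p @ u @ s)
      = (\<Sum>y\<in>{y. length y = n}. v (p @ y @ s) * embed a n b T (p @ y @ s) (p @ u @ s))"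
    unfolding apply_op_def
  proof (rule sum_words_middle[OF assms(1,3)])
    fix z assume "length z = a + n + b" "v z * embed a n b T z (p @ u @ s) \<noteq> 0"
    then have "embed a n b T z (p @ u @ s) \<noteq> 0" by auto
    from embed_nonzeroD[OF this] show "take a z = p \<and> drop (a + n) z = s" using assms by simp
  qed
  also have "\<dots> = (\<Sum>y\<in>{y. length y = n}. slice n p s v y * T y u)"
    by (rule sum.cong) (use assms in \<open>auto simp: embed_append slice_def\<close>)
  finally show ?thesis by (simp add: apply_op_def)
qed

lemma ker_embed_iff:
  fixes T :: "'x::finite list \<Rightarrow> 'x list \<Rightarrow> 'k::field"
  assumes T: "is_endo n T" and v: "v \<in> Vm (a + n + b)"
  shows "v \<in> ker_op (a + n + b) (embed a n b T) \<longleftrightarrow>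
    (\<forall>p s. length p = a \<longrightarrow> length s = b \<longrightarrow> slice n p s v \<in> ker_op n T)"
proof
  assume k: "v \<in> ker_op (a + n + b) (embed a n b T)"
  show "\<forall>p s. length p = a \<longrightarrow> length s = b \<longrightarrow> slice n p s v \<in> ker_op n T"
  proof (intro allI impI)
    fix p s :: "'x list" assume lp: "length p = a" and ls: "length s = b"
    have "apply_op n T (slice n p s v) = (\<lambda>_. 0)"
    proof
      fix u show "apply_op n T (slice n p s v) u = 0"
      proof (cases "length u = n")
        case True
        have "apply_op (a + n + b) (embed a n b T) v (p @ u @ s) = 0" using k by (simp add: ker_op_def)
        then show ?thesis using apply_embed_append[OF lp True ls, of T v] by simp
      next
        case False then show ?thesis using apply_op_Vm[OF T] by (auto simp: Vm_def)
      qed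
    qed
    then show "slice n p s v \<in> ker_op n T" by (simp add: ker_op_def slice_Vm)
  qed
next
  assume h: "\<forall>p s. length p = a \<longrightarrow> length s = b \<longrightarrow> slice n p s v \<in> ker_op n T"
  have "apply_op (a + n + b) (embed a n b T) v = (\<lambda>_. 0)"
  proof
    fix z show "apply_op (a + n + b) (embed a n b T) v z = 0"
    proof (cases "length z = a + n + b")
      case True
      then obtain p y s where z: "z = p @ y @ s" "length p = a" "length y = n" "length s = b"
        using split_append3 by blast
      have "apply_op n T (slice n p s v) = (\<lambda>_. 0)" using h z by (simp add: ker_op_def)
      then show ?thesis using apply_embed_append[OF z(2) z(3) z(4), of T v] z(1) by simp
    next
      case False
      have "is_endo (a + n + b) (embed a n b T)" by (rule is_endo_embed) simp
      then show ?thesis using apply_op_Vm False by (auto simp: Vm_def)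
    qed
  qed
  then show "v \<in> ker_op (a + n + b) (embed a n b T)" using v by (simp add: ker_op_def)
qed

lemma lin_span_base: "a \<in> A \<Longrightarrow> a \<in> lin_span A"
  unfolding lin_span_def
  by (rule CollectI, rule exI[of _ "{a}"], rule exI[of _ "\<lambda>_. 1"]) simp

lemma lin_span_zero: "(\<lambda>_. 0) \<in> lin_span A"
  unfolding lin_span_def
  by (rule CollectI, rule exI[of _ "{}"], rule exI[of _ "\<lambda>_. 1"]) simp

lemma lin_span_add:
  assumes "a \<in> lin_span A" "b \<in> lin_span A"
  shows "(\<lambda>u. a u + b u) \<in> lin_span A"
proof -
  obtain F1 c1 where 1: "finite F1" "F1 \<subseteq> A" "a = (\<lambda>u. \<Sum>f\<in>F1. c1 f * f u)"
    using assms(1) by (auto simp: lin_span_def)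
  obtain F2 c2 where 2: "finite F2" "F2 \<subseteq> A" "b = (\<lambda>u. \<Sum>f\<in>F2. c2 f * f u)"
    using assms(2) by (auto simp: lin_span_def)
  define c where "c = (\<lambda>f. (if f \<in> F1 then c1 f else 0) + (if f \<in> F2 then c2 f else 0))"
  have extend: "(\<Sum>f\<in>F. d f * f u) = (\<Sum>f\<in>F1 \<union> F2. (if f \<in> F then d f else 0) * f u)"
    if "F \<subseteq> F1 \<union> F2" for F d u
    by (rule sum.mono_neutral_cong_left) (use 1 2 that in auto)
  have "a u + b u = (\<Sum>f\<in>F1 \<union> F2. c f * f u)" for u
    unfolding 1(3) 2(3) c_def distrib_right sum.distrib
    using extend[of F1 c1 u] extend[of F2 c2 u] by simp
  then show ?thesis unfolding lin_span_def
    by (intro CollectI exI[of _ "F1 \<union> F2"] exI[of _ c]) (use 1 2 in auto)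
qed

lemma lin_span_sum:
  assumes "finite I" "\<And>i. i \<in> I \<Longrightarrow> h i \<in> lin_span A"
  shows "(\<lambda>u. \<Sum>i\<in>I. h i u) \<in> lin_span A"
  using assms
proof (induction I rule: finite_induct)
  case empty then show ?case using lin_span_zero by simp
next
  case (insert i I)
  have "(\<lambda>u. h i u + (\<lambda>u. \<Sum>i\<in>I. h i u) u) \<in> lin_span A"
    by (rule lin_span_add) (use insert in auto)
  then show ?case using insert by simp
qed

lemma lin_span_subset:
  assumes "word_subspace m W" "A \<subseteq> W"
  shows "lin_span A \<subseteq> W"
proof
  fix v assume "v \<in> lin_span A"
  then obtain F c where F: "finite F" "F \<subseteq> A" "v = (\<lambda>u. \<Sum>f\<in>F. c f * f u)"
    by (auto simp: lin_span_def)
  have "(\<lambda>u. \<Sum>f\<in>F. c f * f u) \<in> W"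
    by (rule word_subspace_lincomb[OF assms(1) F(1)]) (use F(2) assms(2) in blast)
  then show "v \<in> W" using F(3) by simp
qed

lemma tens_append:
  assumes "length p = a" "length s = b" "length p' = a" "length s' = b"
  shows "tens p w s (p' @ y @ s') = (if p' = p \<and> s' = s then w y else 0)"
  using assms by (auto simp: tens_def)

lemma tens_out_of_length:
  assumes "w \<in> Vm n" "length p = a" "length s = b" "length u \<noteq> a + n + b"
  shows "tens p w s u = 0"
proof (rule ccontr)
  assume ne: "tens p w s u \<noteq> 0"
  then have c: "a + b \<le> length u" using assms(2,3) by (auto simp: tens_def split: if_splits)
  then have "w (drop a (take (length u - b) u)) \<noteq> 0"
    using ne assms(2,3) by (auto simp: tens_def split: if_splits)
  moreover have "\<forall>u. w u \<noteq> 0 \<longrightarrow> length u = n" using assms(1) by (simp add: Vm_def)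
  ultimately have "length (drop a (take (length u - b) u)) = n" by blast
  then show False using c assms(4) by simp
qed

lemma slice_tens:
  assumes "w \<in> Vm n" "length p = a" "length s = b" "length p' = a" "length s' = b"
  shows "slice n p' s' (tens p w s) = (if p' = p \<and> s' = s then w else (\<lambda>_. 0))"
  using assms(1) tens_append[OF assms(2-5)] by (auto simp: slice_def Vm_def fun_eq_iff)

lemma Vm_tens_slice_expansion:
  fixes v :: "'x::finite list \<Rightarrow> 'k::field"
  assumes vV: "v \<in> Vm (a + n + b)"
  defines "I \<equiv> {p::'x list. length p = a} \<times> {s::'x list. length s = b}"
  shows "v = (\<lambda>u. \<Sum>q\<in>I. tens (fst q) (slice n (fst q) (snd q) v) (snd q) u)"
proof
  fix u
  have finI: "finite I" unfolding I_def using finite_words by blast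
  have lq: "length (fst q) = a" "length (snd q) = b" if "q \<in> I" for q
    using that by (auto simp: I_def)
  show "v u = (\<Sum>q\<in>I. tens (fst q) (slice n (fst q) (snd q) v) (snd q) u)"
  proof (cases "length u = a + n + b")
    case True
    then obtain p0 y0 s0 where u: "u = p0 @ y0 @ s0" "length p0 = a" "length y0 = n" "length s0 = b"
      using split_append3 by blast
    have "tens (fst q) (slice n (fst q) (snd q) v) (snd q) u = (if q = (p0, s0) then v u else 0)"
      if "q \<in> I" for q
      using tens_append[OF lq[OF that] u(2) u(4), of "slice n (fst q) (snd q) v" y0] u
      by (cases q) (auto simp: slice_def)
    then have "(\<Sum>q\<in>I. tens (fst q) (slice n (fst q) (snd q) v) (snd q) u)
        = (\<Sum>q\<in>I. if q = (p0, s0) then v u else 0)"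
      by (rule sum.cong[OF refl])
    also have "\<dots> = v u" using finI u by (simp add: sum.delta' I_def)
    finally show ?thesis by simp
  next
    case False
    have "tens (fst q) (slice n (fst q) (snd q) v) (snd q) u = 0" if "q \<in> I" for q
      using tens_out_of_length[OF slice_Vm lq[OF that] False] .
    moreover have "v u = 0" using vV False by (auto simp: Vm_def)
    ultimately show ?thesis by simp
  qed
qed

lemma tens_sub_ker_subset:
  fixes T :: "'x::finite list \<Rightarrow> 'x list \<Rightarrow> 'k::field"
  assumes T: "is_endo n T"
  shows "tens_sub a (ker_op n T) b \<subseteq> ker_op (a + n + b) (embed a n b T)"
  unfolding tens_sub_def
proof (rule lin_span_subset[OF word_subspace_ker], rule subsetI)
  fix g assume "g \<in> {tens p w s |p w s. length p = a \<and> w \<in> ker_op n T \<and> length s = b}"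
  then obtain p w s where g: "g = tens p w s" "length p = a" "w \<in> ker_op n T" "length s = b" by blast
  have wV: "w \<in> Vm n" using g(3) by (simp add: ker_op_def)
  have gV: "g \<in> Vm (a + n + b)"
    unfolding Vm_def using tens_out_of_length[OF wV g(2) g(4)] g(1) by auto
  show "g \<in> ker_op (a + n + b) (embed a n b T)"
    unfolding ker_embed_iff[OF T gV]
  proof (intro allI impI)
    fix p' s' :: "'x list" assume "length p' = a" "length s' = b"
    then show "slice n p' s' g \<in> ker_op n T"
      using slice_tens[OF wV g(2,4)] g(1,3) word_subspace_zero[OF word_subspace_ker[of n T]] by simp
  qed
qed

lemma ker_embed_subset_tens_sub:
  fixes T :: "'x::finite list \<Rightarrow> 'x list \<Rightarrow> 'k::field"
  assumes T: "is_endo n T"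
  shows "ker_op (a + n + b) (embed a n b T) \<subseteq> tens_sub a (ker_op n T) b"
proof
  fix v assume vk: "v \<in> ker_op (a + n + b) (embed a n b T)"
  have vV: "v \<in> Vm (a + n + b)" using vk by (simp add: ker_op_def)
  have slk: "slice n p s v \<in> ker_op n T" if "length p = a" "length s = b" for p s
    using vk that unfolding ker_embed_iff[OF T vV] by blast
  let ?I = "{p::'x list. length p = a} \<times> {s::'x list. length s = b}"
  have "(\<lambda>u. \<Sum>q\<in>?I. tens (fst q) (slice n (fst q) (snd q) v) (snd q) u)
      \<in> lin_span {tens p w s |p w s. length p = a \<and> w \<in> ker_op n T \<and> length s = b}"
    by (rule lin_span_sum, use finite_words in blast, rule lin_span_base) (use slk in force)
  then show "v \<in> tens_sub a (ker_op n T) b"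
    unfolding tens_sub_def using Vm_tens_slice_expansion[OF vV] by simp
qed

lemma tens_sub_ker_eq:
  fixes T :: "'x::finite list \<Rightarrow> 'x list \<Rightarrow> 'k::field"
  shows "is_endo n T \<Longrightarrow> tens_sub a (ker_op n T) b = ker_op (a + n + b) (embed a n b T)"
  using tens_sub_ker_subset ker_embed_subset_tens_sub by blast

lemma ker_embed_Int_subset:
  fixes T1 T2 T3 :: "'x::finite list \<Rightarrow> 'x list \<Rightarrow> 'k::field"
  assumes "is_endo n T1" "is_endo n T2" "is_endo n T3"
    and "ker_op n T1 \<inter> ker_op n T2 \<subseteq> ker_op n T3"
  shows "ker_op (a + n + b) (embed a n b T1) \<inter> ker_op (a + n + b) (embed a n b T2)
    \<subseteq> ker_op (a + n + b) (embed a n b T3)"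
proof
  fix v assume v: "v \<in> ker_op (a + n + b) (embed a n b T1) \<inter> ker_op (a + n + b) (embed a n b T2)"
  then have vV: "v \<in> Vm (a + n + b)" by (simp add: ker_op_def)
  have "v \<in> ker_op (a + n + b) (embed a n b T1)" "v \<in> ker_op (a + n + b) (embed a n b T2)"
    using v by auto
  then show "v \<in> ker_op (a + n + b) (embed a n b T3)"
    using assms(4) unfolding ker_embed_iff[OF assms(1) vV] ker_embed_iff[OF assms(2) vV]
      ker_embed_iff[OF assms(3) vV] by blast
qed

section \<open>The operator S of a reduced presentation\<close>

lemma lm_props:
  fixes f :: "'x::{finite,linorder} list \<Rightarrow> 'k::field"
  assumes fV: "f \<in> Vm N" and fn: "f \<noteq> (\<lambda>_. 0)"
  shows "f (lm f) \<noteq> 0 \<and> (\<forall>u. f u \<noteq> 0 \<longrightarrow> u \<le> lm f) \<and> length (lm f) = N"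
proof -
  obtain w where w: "length w = N" "f w \<noteq> 0" "supp_le N w f" using obtain_lead_word[OF fV fn] by blast
  have le: "\<And>u. f u \<noteq> 0 \<Longrightarrow> u \<le> w \<and> length u = N" using w(3) by (auto simp: supp_le_def Vm_def)
  have P: "f w \<noteq> 0 \<and> (\<forall>u. f u \<noteq> 0 \<longrightarrow> u = w \<or> lexless u w)"
  proof (intro conjI allI impI)
    fix u assume "f u \<noteq> 0"
    then have "u \<le> w" "length u = N" using le by auto
    then show "u = w \<or> lexless u w" using lexless_iff_less[of u w] w(1) by auto
  qed (rule w(2))
  have "lm f = w"
    unfolding lm_def
  proof (rule the_equality)
    show "f w \<noteq> 0 \<and> (\<forall>u. f u \<noteq> 0 \<longrightarrow> u = w \<or> lexless u w)" by (rule P)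
  next
    fix w' assume P': "f w' \<noteq> 0 \<and> (\<forall>u. f u \<noteq> 0 \<longrightarrow> u = w' \<or> lexless u w')"
    then have "w' \<le> w" "length w' = N" using le by auto
    moreover have "w = w' \<or> lexless w w'" using P' w(2) by blast
    ultimately show "w' = w" using lexless_iff_less[of w w'] w(1) by auto
  qed
  then show ?thesis using w le by auto
qed

context
  fixes N :: nat and R :: "('x::{finite,linorder} list \<Rightarrow> 'k::field) set"
  assumes red: "reduced_hom_pres N R"
begin

lemma pres_Vm: "f \<in> R \<Longrightarrow> f \<in> Vm N" using red by (auto simp: reduced_hom_pres_def)

lemma pres_lm: "f \<in> R \<Longrightarrow> f (lm f) = 1 \<and> (\<forall>u. f u \<noteq> 0 \<longrightarrow> u \<le> lm f) \<and> length (lm f) = N"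
proof -
  assume f: "f \<in> R"
  have "f \<noteq> (\<lambda>_. 0)" "f (lm f) = 1" using red f by (auto simp: reduced_hom_pres_def)
  with lm_props[OF pres_Vm[OF f]] show ?thesis by simp
qed

lemma pres_lm_inj: "f \<in> R \<Longrightarrow> g \<in> R \<Longrightarrow> lm f = lm g \<Longrightarrow> f = g"
proof (rule ccontr)
  assume f: "f \<in> R" and g: "g \<in> R" and e: "lm f = lm g" and ne: "f \<noteq> g"
  have "\<not> is_factor (lm g) (lm f)" using red f g ne by (auto simp: reduced_hom_pres_def)
  moreover have "is_factor (lm g) (lm f)" unfolding is_factor_def e
    by (rule exI[of _ "[]"], rule exI[of _ "[]"]) simp
  ultimately show False by simp
qed

lemma pres_not_lm: "f \<in> R \<Longrightarrow> u \<noteq> lm f \<Longrightarrow> f u \<noteq> 0 \<Longrightarrow> \<not> (\<exists>g\<in>R. lm g = u)"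
proof
  assume f: "f \<in> R" and u: "u \<noteq> lm f" "f u \<noteq> 0" and "\<exists>g\<in>R. lm g = u"
  then obtain g where g: "g \<in> R" "lm g = u" by blast
  have "normal_form R u" using red f u by (auto simp: reduced_hom_pres_def)
  then have "\<not> is_factor (lm g) u" using g(1) by (simp add: normal_form_def)
  moreover have "is_factor (lm g) u" unfolding is_factor_def g(2)
    by (rule exI[of _ "[]"], rule exI[of _ "[]"]) simp
  ultimately show False by simp
qed

lemma pres_at_lm: "f \<in> R \<Longrightarrow> g \<in> R \<Longrightarrow> f (lm g) = (if f = g then 1 else 0)"
proof -
  assume f: "f \<in> R" and g: "g \<in> R"
  show ?thesis
  proof (cases "f = g")
    case True then show ?thesis using pres_lm[OF f] by simp
  next
    case False
    then have "lm g \<noteq> lm f" using pres_lm_inj[OF f g] by auto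
    then have "f (lm g) = 0" using pres_not_lm[OF f] g by blast
    then show ?thesis using False by simp
  qed
qed

lemma pres_finite: "finite R"
proof -
  have "lm ` R \<subseteq> {w. length w = N}" using pres_lm by auto
  then have "finite (lm ` R)" using finite_subset[OF _ finite_words] by blast
  moreover have "inj_on lm R" using pres_lm_inj by (auto simp: inj_on_def)
  ultimately show ?thesis using finite_imageD by blast
qed

abbreviation "SS \<equiv> S_op N R"

lemma S_op_lm: "f \<in> R \<Longrightarrow> SS (lm f) = (\<lambda>u. delta (lm f) u - f u)"
proof
  fix u assume f: "f \<in> R"
  have lf: "length (lm f) = N" using pres_lm[OF f] by simp
  have some: "(SOME g. g \<in> R \<and> lm g = lm f) = f"
  proof (rule some_equality)
    show "f \<in> R \<and> lm f = lm f" using f by simp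
  next
    fix g assume "g \<in> R \<and> lm g = lm f"
    then show "g = f" using pres_lm_inj[OF f, of g] by auto
  qed
  show "SS (lm f) u = delta (lm f) u - f u"
  proof (cases "length u = N")
    case True then show ?thesis using f lf some by (auto simp: S_op_def)
  next
    case False
    then have "u \<noteq> lm f" "f u = 0" using lf pres_Vm[OF f] by (auto simp: Vm_def)
    then show ?thesis using False by (simp add: S_op_def delta_def)
  qed
qed

lemma S_op_not_lm: "length w = N \<Longrightarrow> \<not> (\<exists>f\<in>R. lm f = w) \<Longrightarrow> SS w = delta w"
proof
  fix u assume lw: "length w = N" and nl: "\<not> (\<exists>f\<in>R. lm f = w)"
  show "SS w u = delta w u"
  proof (cases "length u = N")
    case True then show ?thesis using lw nl by (simp add: S_op_def)
  next
    case False then have "u \<noteq> w" using lw by auto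
    then show ?thesis using False by (simp add: S_op_def delta_def)
  qed
qed

lemma is_endo_S_op: "is_endo N SS"
  unfolding is_endo_def S_op_def by (auto split: if_splits)

lemma S_op_nonzero_length: "SS w u \<noteq> 0 \<Longrightarrow> length w = N \<and> length u = N"
  using is_endo_S_op unfolding is_endo_def by blast

lemma S_op_lm_row_nonzeroD:
  assumes f: "f \<in> R" and ne: "SS (lm f) u \<noteq> 0"
  shows "u < lm f" "\<not> (\<exists>g\<in>R. lm g = u)"
proof -
  have "delta (lm f) u - f u \<noteq> 0" using ne S_op_lm[OF f] by simp
  moreover have "f (lm f) = 1" using pres_lm[OF f] by simp
  ultimately have u: "u \<noteq> lm f" "f u \<noteq> 0" by (auto simp: delta_def split: if_splits)
  then show "u < lm f" using pres_lm[OF f] by (simp add: order_le_neq_trans)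
  show "\<not> (\<exists>g\<in>R. lm g = u)" by (rule pres_not_lm[OF f u])
qed

lemma S_op_row_fixed:
  assumes ne: "SS w y \<noteq> 0"
  shows "SS y = delta y"
proof -
  have l: "length w = N" "length y = N" using S_op_nonzero_length[OF ne] by auto
  have "\<not> (\<exists>g\<in>R. lm g = y)"
  proof (cases "\<exists>f\<in>R. lm f = w")
    case True
    then obtain f where "f \<in> R" "lm f = w" by blast
    then show ?thesis using S_op_lm_row_nonzeroD(2) ne by blast
  next
    case False
    then have "y = w" using ne S_op_not_lm[OF l(1) False] by (auto simp: delta_def split: if_splits)
    then show ?thesis using False by simp
  qed
  then show ?thesis by (rule S_op_not_lm[OF l(2)])
qed

lemma red_op_S_op: "red_op N SS"
  unfolding red_op_def
proof (intro conjI allI impI)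
  fix w u assume "SS w u \<noteq> 0"
  then show "length w = N" "length u = N" using S_op_nonzero_length by auto
next
  show "comp N SS SS = SS" by (rule comp_idem_if_rows_fixed[OF is_endo_S_op S_op_row_fixed])
next
  fix w :: "'x list" assume lw: "length w = N"
  show "SS w = delta w \<or> (\<forall>u. SS w u \<noteq> 0 \<longrightarrow> lexless u w)"
  proof (cases "\<exists>f\<in>R. lm f = w")
    case False then show ?thesis using S_op_not_lm lw by simp
  next
    case True
    then obtain f where f: "f \<in> R" "lm f = w" by blast
    have "lexless u w" if "SS w u \<noteq> 0" for u
    proof -
      have "u < w" using S_op_lm_row_nonzeroD(1)[OF f(1)] that f(2) by simp
      moreover have "length u = N" using S_op_nonzero_length[OF that] by simp
      ultimately show ?thesis using lexless_iff_less[of u w] lw by simp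
    qed
    then show ?thesis by blast
  qed
qed

lemma pres_in_ker_S_op:
  assumes f: "f \<in> R"
  shows "f \<in> ker_op N SS"
proof -
  have "(\<lambda>u. delta (lm f) u - SS (lm f) u) \<in> ker_op N SS"
    by (rule red_op_row_ker[OF red_op_S_op]) (use pres_lm[OF f] in simp)
  moreover have "(\<lambda>u. delta (lm f) u - SS (lm f) u) = f" by (simp add: S_op_lm[OF f])
  ultimately show ?thesis by simp
qed

lemma lin_span_subset_ker_S_op: "lin_span R \<subseteq> ker_op N SS"
  by (rule lin_span_subset[OF word_subspace_ker]) (use pres_in_ker_S_op in blast)

text \<open>Subtracting \<open>\<Sum>f\<in>R. v (lm f) \<cdot> f\<close> from \<open>v \<in> ker S\<close> leaves a kernel vector vanishing on all
  leading words; such a vector is fixed by S, hence zero.\<close>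

lemma ker_S_op_subset_lin_span: "ker_op N SS \<subseteq> lin_span R"
proof
  fix v assume vk: "v \<in> ker_op N SS"
  define z where "z = (\<lambda>u. \<Sum>f\<in>R. v (lm f) * f u)"
  have zspan: "z \<in> lin_span R" unfolding lin_span_def z_def
    by (rule CollectI, rule exI[of _ R], rule exI[of _ "\<lambda>f. v (lm f)"]) (simp add: pres_finite)
  have zk: "z \<in> ker_op N SS" unfolding z_def
    by (rule word_subspace_lincomb[OF word_subspace_ker pres_finite]) (rule pres_in_ker_S_op)
  define x where "x = (\<lambda>u. v u - z u)"
  have xk: "x \<in> ker_op N SS" unfolding x_def by (rule word_subspace_diff[OF word_subspace_ker vk zk])
  have z_lm: "z (lm g) = v (lm g)" if g: "g \<in> R" for g
  proof -
    have "z (lm g) = (\<Sum>f\<in>R. if f = g then v (lm g) else 0)"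
      unfolding z_def by (rule sum.cong[OF refl]) (simp add: pres_at_lm[OF _ g])
    also have "\<dots> = v (lm g)" using g pres_finite by (simp add: sum.delta)
    finally show ?thesis .
  qed
  have "apply_op N SS x = x"
  proof (rule apply_op_fixed_on_supp)
    show "x \<in> Vm N" using xk by (simp add: ker_op_def)
  next
    fix y assume "x y \<noteq> 0"
    then have "\<not> (\<exists>g\<in>R. lm g = y)" using z_lm by (auto simp: x_def)
    moreover have "length y = N" using \<open>x y \<noteq> 0\<close> xk by (auto simp: ker_op_def Vm_def)
    ultimately show "SS y = delta y" by (rule S_op_not_lm[rotated])
  qed
  then have "x = (\<lambda>_. 0)" using xk by (simp add: ker_op_def)
  have "v = z"
  proof
    fix u show "v u = z u" using fun_cong[OF \<open>x = (\<lambda>_. 0)\<close>, of u] by (simp add: x_def)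
  qed
  then show "v \<in> lin_span R" using zspan by simp
qed

lemma ker_S_op: "ker_op N SS = lin_span R"
  using lin_span_subset_ker_S_op ker_S_op_subset_lin_span by blast

lemma tens_sub_lin_span_eq_ker:
  "M = a + N + b \<Longrightarrow> tens_sub a (lin_span R) b = ker_op M (embed a N b SS)"
  using tens_sub_ker_eq[OF is_endo_S_op] by (simp add: ker_S_op)

lemma extra_confluent_ker:
  assumes ec: "extra_confluent N R" and n: "2 \<le> n" "n \<le> N - 1"
  shows "ker_op (N + n) (embed n N 0 SS) \<inter> ker_op (N + n) (embed 0 N n SS)
       \<subseteq> ker_op (N + n) (embed (n - 1) N 1 SS)"
proof -
  have "tens_sub n (lin_span R) 0 \<inter> tens_sub 0 (lin_span R) n \<subseteq> tens_sub (n - 1) (lin_span R) 1"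
    using ec n by (simp add: extra_confluent_def)
  moreover have "tens_sub n (lin_span R) 0 = ker_op (N + n) (embed n N 0 SS)"
    by (rule tens_sub_lin_span_eq_ker) simp
  moreover have "tens_sub 0 (lin_span R) n = ker_op (N + n) (embed 0 N n SS)"
    by (rule tens_sub_lin_span_eq_ker) simp
  moreover have "tens_sub (n - 1) (lin_span R) 1 = ker_op (N + n) (embed (n - 1) N 1 SS)"
    by (rule tens_sub_lin_span_eq_ker) (use n in simp)
  ultimately show ?thesis by simp
qed

end

lemma embed_embed_eq:
  "n = c + N + d \<Longrightarrow> a' = a + c \<Longrightarrow> b' = d + b \<Longrightarrow> embed a n b (embed c N d S) = embed a' N b' S"
  using embed_embed by simp

lemma Sm_braid_shift:
  fixes R :: "('x::{finite,linorder} list \<Rightarrow> 'k::field) set"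
  assumes sc: "side_confluent N R" and j: "1 \<le> j" "j \<le> N - 1" and m: "i + N + j \<le> m"
  shows "\<exists>k\<ge>1. braid m (Sm N R m (i + j)) (Sm N R m i) k = braid m (Sm N R m i) (Sm N R m (i + j)) k"
proof -
  obtain k where k: "k \<ge> 1" "braid (N + j) (embed j N 0 (S_op N R)) (embed 0 N j (S_op N R)) k
          = braid (N + j) (embed 0 N j (S_op N R)) (embed j N 0 (S_op N R)) k"
    using sc j by (auto simp: side_confluent_def)
  define c where "c = m - N - j - i"
  have mc: "i + (N + j) + c = m" using m by (simp add: c_def)
  have e1: "embed i (N + j) c (embed j N 0 (S_op N R)) = Sm N R m (i + j)"
    unfolding Sm_def by (rule embed_embed_eq) (use m in \<open>auto simp: c_def\<close>)
  have e2: "embed i (N + j) c (embed 0 N j (S_op N R)) = Sm N R m i"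
    unfolding Sm_def by (rule embed_embed_eq) (use m in \<open>auto simp: c_def\<close>)
  from arg_cong[OF k(2), of "embed i (N + j) c"]
  have "braid (i + (N + j) + c) (Sm N R m (i + j)) (Sm N R m i) k
      = braid (i + (N + j) + c) (Sm N R m i) (Sm N R m (i + j)) k"
    by (simp only: embed_braid e1 e2)
  then show ?thesis using k(1) mc by auto
qed

section \<open>Braided families of reduction operators\<close>

function nf_op :: "nat \<Rightarrow> (nat \<Rightarrow> 'x::{finite,linorder} list \<Rightarrow> 'x list \<Rightarrow> 'k::field) \<Rightarrow> nat set \<Rightarrow> 'x list \<Rightarrow> 'x list \<Rightarrow> 'k" where
  "nf_op m T A w = (if length w = m \<and> (\<exists>i\<in>A. T i w \<noteq> delta w)
     then (\<lambda>u. \<Sum>y\<in>{y. length y = m \<and> y < w}. T (SOME i. i \<in> A \<and> T i w \<noteq> delta w) w y * nf_op m T A y u)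
     else (if length w = m then delta w else (\<lambda>_. 0)))"
  by auto
termination
  by (relation "measure (\<lambda>(m, T, A, w). card {u. length u = m \<and> u < w})")
    (auto intro!: psubset_card_mono[OF finite_words_less])

declare nf_op.simps[simp del]

definition kernel_sum :: "nat \<Rightarrow> (nat \<Rightarrow> 'x list \<Rightarrow> 'x list \<Rightarrow> 'k::field) \<Rightarrow> nat set \<Rightarrow> 'x list set \<Rightarrow> ('x list \<Rightarrow> 'k) set" where
  "kernel_sum m T A Z = {v. \<exists>vs. (\<forall>i\<in>A. vs i \<in> ker_op m (T i) \<and> (\<forall>u. vs i u \<noteq> 0 \<longrightarrow> u \<in> Z)) \<and> v = (\<lambda>u. \<Sum>i\<in>A. vs i u)}"

lemma kernel_sumI: "(\<And>i. i \<in> A \<Longrightarrow> vs i \<in> ker_op m (T i)) \<Longrightarrow> (\<And>i u. i \<in> A \<Longrightarrow> vs i u \<noteq> 0 \<Longrightarrow> u \<in> Z)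
   \<Longrightarrow> (\<lambda>u. \<Sum>i\<in>A. vs i u) \<in> kernel_sum m T A Z"
  unfolding kernel_sum_def by blast

lemma kernel_sumD: "v \<in> kernel_sum m T A Z \<Longrightarrow> \<exists>vs. (\<forall>i\<in>A. vs i \<in> ker_op m (T i)) \<and> (\<forall>i\<in>A. \<forall>u. vs i u \<noteq> 0 \<longrightarrow> u \<in> Z)
   \<and> v = (\<lambda>u. \<Sum>i\<in>A. vs i u)"
  unfolding kernel_sum_def by blast

lemma word_subspace_kernel_sum:
  fixes T :: "nat \<Rightarrow> 'x list \<Rightarrow> 'x list \<Rightarrow> 'k::field"
  assumes finA: "finite A"
  shows "word_subspace m (kernel_sum m T A Z)"
  unfolding word_subspace_def
proof (intro conjI ballI allI subsetI)
  fix x assume xK: "x \<in> kernel_sum m T A Z"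
  obtain vs where vs: "\<forall>i\<in>A. vs i \<in> ker_op m (T i) \<and> (\<forall>u. vs i u \<noteq> 0 \<longrightarrow> u \<in> Z)"
    "x = (\<lambda>u. \<Sum>i\<in>A. vs i u)"
    using xK unfolding kernel_sum_def by blast
  have "(\<lambda>u. \<Sum>i\<in>A. vs i u) \<in> Vm m"
    by (rule word_subspace_sum[OF word_subspace_Vm finA]) (use vs(1) in \<open>auto simp: ker_op_def\<close>)
  then show "x \<in> Vm m" using vs(2) by simp
next
  have "(\<lambda>u. \<Sum>i\<in>A. (\<lambda>i u. 0) i u) \<in> kernel_sum m T A Z"
    by (rule kernel_sumI) (auto intro: word_subspace_zero[OF word_subspace_ker])
  then show "(\<lambda>_. 0) \<in> kernel_sum m T A Z" by simp
next
  fix a b assume a: "a \<in> kernel_sum m T A Z" and b: "b \<in> kernel_sum m T A Z"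
  obtain vs where vs: "\<forall>i\<in>A. vs i \<in> ker_op m (T i)" "\<forall>i\<in>A. \<forall>u. vs i u \<noteq> 0 \<longrightarrow> u \<in> Z"
    "a = (\<lambda>u. \<Sum>i\<in>A. vs i u)" using kernel_sumD[OF a] by blast
  obtain ws where ws: "\<forall>i\<in>A. ws i \<in> ker_op m (T i)" "\<forall>i\<in>A. \<forall>u. ws i u \<noteq> 0 \<longrightarrow> u \<in> Z"
    "b = (\<lambda>u. \<Sum>i\<in>A. ws i u)" using kernel_sumD[OF b] by blast
  have "(\<lambda>u. \<Sum>i\<in>A. (\<lambda>i u. vs i u + ws i u) i u) \<in> kernel_sum m T A Z"
  proof (rule kernel_sumI)
    fix i assume "i \<in> A"
    then show "(\<lambda>u. vs i u + ws i u) \<in> ker_op m (T i)" using word_subspace_add[OF word_subspace_ker] vs(1) ws(1) by blast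
  next
    fix i u assume "i \<in> A" "vs i u + ws i u \<noteq> 0"
    then have "vs i u \<noteq> 0 \<or> ws i u \<noteq> 0" by auto
    then show "u \<in> Z" using vs(2) ws(2) \<open>i \<in> A\<close> by blast
  qed
  then show "(\<lambda>u. a u + b u) \<in> kernel_sum m T A Z" using vs(3) ws(3) by (simp add: sum.distrib)
next
  fix c a assume a: "a \<in> kernel_sum m T A Z"
  obtain vs where vs: "\<forall>i\<in>A. vs i \<in> ker_op m (T i)" "\<forall>i\<in>A. \<forall>u. vs i u \<noteq> 0 \<longrightarrow> u \<in> Z"
    "a = (\<lambda>u. \<Sum>i\<in>A. vs i u)" using kernel_sumD[OF a] by blast
  have "(\<lambda>u. \<Sum>i\<in>A. (\<lambda>i u. c * vs i u) i u) \<in> kernel_sum m T A Z"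
  proof (rule kernel_sumI)
    fix i assume "i \<in> A"
    then show "(\<lambda>u. c * vs i u) \<in> ker_op m (T i)" using word_subspace_smult[OF word_subspace_ker] vs(1) by blast
  next
    fix i u assume "i \<in> A" "c * vs i u \<noteq> 0"
    then have "vs i u \<noteq> 0" by auto
    then show "u \<in> Z" using vs(2) \<open>i \<in> A\<close> by blast
  qed
  then show "(\<lambda>u. c * a u) \<in> kernel_sum m T A Z" using vs(3) by (simp add: sum_distrib_left)
qed

lemma kernel_sum_mono: "Z \<subseteq> Z' \<Longrightarrow> kernel_sum m T A Z \<subseteq> kernel_sum m T A Z'"
  unfolding kernel_sum_def by blast

lemma kernel_sum_single:
  fixes T :: "nat \<Rightarrow> 'x list \<Rightarrow> 'x list \<Rightarrow> 'k::field"
  assumes finA: "finite A" and j: "j \<in> A" and v: "v \<in> ker_op m (T j)" and Z: "\<And>u. v u \<noteq> 0 \<Longrightarrow> u \<in> Z"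
  shows "v \<in> kernel_sum m T A Z"
proof -
  define vs where "vs = (\<lambda>i. if i = j then v else (\<lambda>_. 0))"
  have "(\<lambda>u. \<Sum>i\<in>A. vs i u) \<in> kernel_sum m T A Z"
  proof (rule kernel_sumI)
    fix i assume "i \<in> A" then show "vs i \<in> ker_op m (T i)"
      using v word_subspace_zero[OF word_subspace_ker[of m "T i"]] by (simp add: vs_def)
  next
    fix i u assume "i \<in> A" "vs i u \<noteq> 0" then show "u \<in> Z" using Z by (auto simp: vs_def split: if_splits)
  qed
  moreover have "(\<lambda>u. \<Sum>i\<in>A. vs i u) = v"
  proof
    fix u
    have "(\<Sum>i\<in>A. vs i u) = (\<Sum>i\<in>A. if i = j then v u else 0)" by (rule sum.cong) (auto simp: vs_def)
    also have "\<dots> = v u" using finA j by (simp add: sum.delta')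
    finally show "(\<Sum>i\<in>A. vs i u) = v u" by simp
  qed
  ultimately show ?thesis by simp
qed

lemma apply_idop:
  fixes v :: "'x::finite list \<Rightarrow> 'k::field"
  shows "v \<in> Vm m \<Longrightarrow> apply_op m (idop m) v = v"
  by (rule apply_op_fixed_on_supp) (auto simp: Vm_def idop_def delta_def)

text \<open>For a finite family of reduction operators satisfying pairwise braid relations, the normal
  form \<open>NF\<close> obtained by repeatedly reducing with any applicable operator does not depend on the
  choices made: the braid relations make the reductions locally confluent, and induction along the
  lexicographic order does the rest. Hence \<open>NF\<close> kills every kernel, while \<open>w - NF w\<close> lies in the
  sum of the kernels with summands supported on words \<open>\<le> w\<close>; so elements of the sum of the kernels
  decompose without exceeding their leading word.\<close>

locale braided_family =
  fixes m :: nat and T :: "nat \<Rightarrow> 'x::{finite,linorder} list \<Rightarrow> 'x list \<Rightarrow> 'k::field" and A :: "nat set"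
  assumes finA: "finite A"
    and redT: "\<And>i. i \<in> A \<Longrightarrow> red_op m (T i)"
    and braidT: "\<And>i j. i \<in> A \<Longrightarrow> j \<in> A \<Longrightarrow> \<exists>k\<ge>1. braid m (T i) (T j) k = braid m (T j) (T i) k"
begin

abbreviation "NF \<equiv> nf_op m T A"

lemma row_supp_less: "i \<in> A \<Longrightarrow> length w = m \<Longrightarrow> T i w \<noteq> delta w \<Longrightarrow> supp_less m w (T i w)"
  by (rule red_op_row_supp_less[OF redT])

lemma nf_irreducible: "length w = m \<Longrightarrow> \<forall>i\<in>A. T i w = delta w \<Longrightarrow> NF w = delta w"
  by (subst nf_op.simps) simp

lemma nf_out: "length w \<noteq> m \<Longrightarrow> NF w = (\<lambda>_. 0)"
  by (subst nf_op.simps) simp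

definition reducing_index :: "'x list \<Rightarrow> nat" where "reducing_index w = (SOME i. i \<in> A \<and> T i w \<noteq> delta w)"

lemma reducing_index: "\<exists>i\<in>A. T i w \<noteq> delta w \<Longrightarrow> reducing_index w \<in> A \<and> T (reducing_index w) w \<noteq> delta w"
  unfolding reducing_index_def by (rule someI_ex) blast

lemma nf_reducible: assumes lw: "length w = m" and r: "\<exists>i\<in>A. T i w \<noteq> delta w"
  shows "NF w = apply_op m NF (T (reducing_index w) w)"
proof
  fix u
  have "NF w u = (\<Sum>y\<in>{y. length y = m \<and> y < w}. T (reducing_index w) w y * NF y u)"
    by (subst nf_op.simps) (simp add: lw r reducing_index_def)
  also have "\<dots> = (\<Sum>y\<in>{y. length y = m}. T (reducing_index w) w y * NF y u)"
  proof (rule sum.mono_neutral_left[OF finite_words])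
    show "{y. length y = m \<and> y < w} \<subseteq> {y. length y = m}" by auto
  next
    have "supp_less m w (T (reducing_index w) w)" using row_supp_less reducing_index[OF r] lw by blast
    then show "\<forall>y\<in>{y. length y = m} - {y. length y = m \<and> y < w}. T (reducing_index w) w y * NF y u = 0"
      by (auto simp: supp_less_def)
  qed
  finally show "NF w u = apply_op m NF (T (reducing_index w) w) u" by (simp add: apply_op_def)
qed

lemma apply_T_supp_less: "l \<in> A \<Longrightarrow> supp_less m w v \<Longrightarrow> supp_less m w (apply_op m (T l) v)"
proof -
  assume l: "l \<in> A" and v: "supp_less m w v"
  show "supp_less m w (apply_op m (T l) v)" unfolding supp_less_def
  proof (intro conjI allI impI)
    show "apply_op m (T l) v \<in> Vm m" by (rule apply_op_Vm[OF red_op_is_endo[OF redT[OF l]]])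
  next
    fix u assume "apply_op m (T l) v u \<noteq> 0"
    then obtain y where "v y * T l y u \<noteq> 0" unfolding apply_op_def
      by (meson sum.not_neutral_contains_not_neutral)
    then have vy: "v y \<noteq> 0" and Tyu: "T l y u \<noteq> 0" by auto
    then have yw: "y < w" and ly: "length y = m" using v by (auto simp: supp_less_def Vm_def)
    have "T l y = delta y \<or> (\<forall>u. T l y u \<noteq> 0 \<longrightarrow> u < y)" by (rule red_op_row_cases[OF redT[OF l] ly])
    then have "u = y \<or> u < y" using Tyu by (auto simp: delta_def split: if_splits)
    then show "u < w" using yw by auto
  qed
qed

lemma apply_nf_T_supp_less:
  assumes IH: "\<And>y l. length y = m \<Longrightarrow> y < w \<Longrightarrow> l \<in> A \<Longrightarrow> apply_op m NF (T l y) = NF y"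
    and l: "l \<in> A" and v: "supp_less m w v"
  shows "apply_op m NF (apply_op m (T l) v) = apply_op m NF v"
proof
  fix u
  have "apply_op m NF (apply_op m (T l) v) u = apply_op m (comp m NF (T l)) v u"
    by (simp add: apply_op_comp)
  also have "\<dots> = apply_op m NF v u"
    unfolding apply_op_def
  proof (rule sum.cong)
    fix y assume y: "y \<in> {y::'x list. length y = m}"
    show "v y * comp m NF (T l) y u = v y * NF y u"
    proof (cases "v y = 0")
      case False
      then have "y < w" using v by (auto simp: supp_less_def)
      then have "comp m NF (T l) y = NF y" using IH[OF _ _ l] y comp_row[of y m NF "T l"] by simp
      then show ?thesis by simp
    qed simp
  qed simp
  finally show "apply_op m NF (apply_op m (T l) v) u = apply_op m NF v u" .
qed

lemma apply_nf_braid: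
  assumes IH: "\<And>y l. length y = m \<Longrightarrow> y < w \<Longrightarrow> l \<in> A \<Longrightarrow> apply_op m NF (T l y) = NF y"
  shows "i \<in> A \<Longrightarrow> j \<in> A \<Longrightarrow> supp_less m w v \<Longrightarrow> apply_op m NF (apply_op m (braid m (T i) (T j) k) v) = apply_op m NF v"
proof (induction k arbitrary: i j v)
  case 0
  then have "v \<in> Vm m" by (simp add: supp_less_def)
  then show ?case by (simp add: apply_idop)
next
  case (Suc k)
  have "apply_op m (braid m (T i) (T j) (Suc k)) v = apply_op m (braid m (T j) (T i) k) (apply_op m (T j) v)"
    by (simp add: apply_op_comp)
  moreover have "supp_less m w (apply_op m (T j) v)" by (rule apply_T_supp_less[OF Suc.prems(2,3)])
  ultimately have "apply_op m NF (apply_op m (braid m (T i) (T j) (Suc k)) v) = apply_op m NF (apply_op m (T j) v)"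
    using Suc.IH[OF Suc.prems(2) Suc.prems(1)] by simp
  also have "\<dots> = apply_op m NF v" by (rule apply_nf_T_supp_less[OF IH Suc.prems(2,3)])
  finally show ?case .
qed

text \<open>Local confluence: the braid relation between \<open>T i\<close> and the operator used to define
  \<open>NF w\<close> rewrites both rows to a common value below \<open>w\<close>, where \<open>NF\<close> is already invariant.\<close>

lemma nf_absorbs:
  assumes "length w = m" "i \<in> A"
  shows "apply_op m NF (T i w) = NF w"
  using assms
proof (induction w arbitrary: i rule: words_less_induct)
  case (less w)
  have IH: "\<And>y l. length y = m \<Longrightarrow> y < w \<Longrightarrow> l \<in> A \<Longrightarrow> apply_op m NF (T l y) = NF y"
    using less(2) by blast
  show ?case
  proof (cases "T i w = delta w")
    case True then show ?thesis using apply_op_delta[OF less(1), of NF] by simp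
  next
    case ri: False
    then have r: "\<exists>i\<in>A. T i w \<noteq> delta w" using less(3) by blast
    define j where "j = reducing_index w"
    have j: "j \<in> A" "T j w \<noteq> delta w" using reducing_index[OF r] j_def by auto
    obtain k where k: "k \<ge> 1" "braid m (T i) (T j) k = braid m (T j) (T i) k"
      using braidT[OF less(3) j(1)] by blast
    obtain k' where k': "k = Suc k'" using k(1) by (cases k) auto
    have Bi: "supp_less m w (T i w)" by (rule row_supp_less[OF less(3) less(1) ri])
    have Bj: "supp_less m w (T j w)" by (rule row_supp_less[OF j(1) less(1) j(2)])
    have "apply_op m NF (braid m (T i) (T j) k w) = apply_op m NF (apply_op m (braid m (T j) (T i) k') (T j w))"
      using comp_row[OF less(1), of "braid m (T j) (T i) k'" "T j"] k' by simp
    also have "\<dots> = apply_op m NF (T j w)" by (rule apply_nf_braid[OF IH j(1) less(3) Bj])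
    finally have e1: "apply_op m NF (braid m (T i) (T j) k w) = apply_op m NF (T j w)" .
    have "apply_op m NF (braid m (T j) (T i) k w) = apply_op m NF (apply_op m (braid m (T i) (T j) k') (T i w))"
      using comp_row[OF less(1), of "braid m (T i) (T j) k'" "T i"] k' by simp
    also have "\<dots> = apply_op m NF (T i w)" by (rule apply_nf_braid[OF IH less(3) j(1) Bi])
    finally have e2: "apply_op m NF (braid m (T j) (T i) k w) = apply_op m NF (T i w)" .
    have "NF w = apply_op m NF (T j w)" using nf_reducible[OF less(1) r] j_def by simp
    then show ?thesis using e1 e2 k(2) by simp
  qed
qed

lemma comp_nf_absorbs: "i \<in> A \<Longrightarrow> comp m NF (T i) = NF"
proof (intro ext)
  fix w u assume i: "i \<in> A"
  show "comp m NF (T i) w u = NF w u"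
  proof (cases "length w = m")
    case True then show ?thesis using comp_row[OF True, of NF "T i"] nf_absorbs[OF True i] by simp
  next
    case False
    have "comp m NF (T i) w u = 0" unfolding comp_def
    proof (rule sum.neutral, rule ballI)
      fix y
      have "T i w y = 0" using red_op_is_endo[OF redT[OF i]] False by (auto simp: is_endo_def)
      then show "T i w y * NF y u = 0" by simp
    qed
    then show ?thesis using nf_out[OF False] by simp
  qed
qed

lemma nf_kills_ker: "i \<in> A \<Longrightarrow> v \<in> ker_op m (T i) \<Longrightarrow> apply_op m NF v = (\<lambda>_. 0)"
proof -
  assume i: "i \<in> A" and v: "v \<in> ker_op m (T i)"
  have "apply_op m NF v = apply_op m (comp m NF (T i)) v" using comp_nf_absorbs[OF i] by simp
  also have "\<dots> = apply_op m NF (apply_op m (T i) v)" by (rule apply_op_comp)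
  also have "\<dots> = (\<lambda>_. 0)" using v by (simp add: ker_op_def apply_op_zero)
  finally show ?thesis .
qed

lemma nf_kills_kernel_sum: "v \<in> kernel_sum m T A Z \<Longrightarrow> apply_op m NF v = (\<lambda>_. 0)"
proof -
  assume "v \<in> kernel_sum m T A Z"
  then obtain vs where vs: "\<forall>i\<in>A. vs i \<in> ker_op m (T i)" "\<forall>i\<in>A. \<forall>u. vs i u \<noteq> 0 \<longrightarrow> u \<in> Z"
    "v = (\<lambda>u. \<Sum>i\<in>A. vs i u)"
    using kernel_sumD by blast
  have "apply_op m NF v = (\<lambda>u. \<Sum>i\<in>A. apply_op m NF (vs i) u)"
    using apply_op_sum[OF finA, of m NF vs] vs(3) by simp
  also have "\<dots> = (\<lambda>_. 0)" using nf_kills_ker vs(1) by simp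
  finally show ?thesis .
qed

lemma minus_nf_in_kernel_sum_if_rows:
  assumes v: "v \<in> Vm m"
    and rows: "\<And>y. length y = m \<Longrightarrow> v y \<noteq> 0 \<Longrightarrow> (\<lambda>u. delta y u - NF y u) \<in> kernel_sum m T A Z"
  shows "(\<lambda>u. v u - apply_op m NF v u) \<in> kernel_sum m T A Z"
proof -
  have S: "word_subspace m (kernel_sum m T A Z)" by (rule word_subspace_kernel_sum[OF finA])
  define f where "f = (\<lambda>y. if v y \<noteq> 0 then (\<lambda>u. delta y u - NF y u) else (\<lambda>_. 0))"
  have "(\<lambda>u. \<Sum>y\<in>{y. length y = m}. v y * f y u) \<in> kernel_sum m T A Z"
    by (rule word_subspace_lincomb[OF S finite_words]) (use rows word_subspace_zero[OF S] in \<open>simp add: f_def\<close>)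
  moreover have "(\<Sum>y\<in>{y. length y = m}. v y * f y u) = v u - apply_op m NF v u" for u
  proof -
    have "(\<Sum>y\<in>{y. length y = m}. v y * f y u) = (\<Sum>y\<in>{y. length y = m}. v y * (delta y u - NF y u))"
      by (rule sum.cong) (auto simp: f_def)
    also have "\<dots> = v u - apply_op m NF v u"
      by (subst (2) Vm_delta_expansion[OF v]) (simp add: apply_op_def right_diff_distrib sum_subtractf)
    finally show ?thesis .
  qed
  ultimately show ?thesis by simp
qed

lemma delta_minus_nf_in_kernel_sum:
  assumes "length w = m"
  shows "(\<lambda>u. delta w u - NF w u) \<in> kernel_sum m T A {u. u \<le> w}"
  using assms
proof (induction w rule: words_less_induct)
  case (less w)
  show ?case
  proof (cases "\<exists>i\<in>A. T i w \<noteq> delta w")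
    case False
    then show ?thesis using nf_irreducible[OF less(1)] word_subspace_zero[OF word_subspace_kernel_sum[OF finA]] by simp
  next
    case True
    define j where "j = reducing_index w"
    have j: "j \<in> A" "T j w \<noteq> delta w" using reducing_index[OF True] j_def by auto
    have Bj: "supp_less m w (T j w)" by (rule row_supp_less[OF j(1) less(1) j(2)])
    have a: "(\<lambda>u. delta w u - T j w u) \<in> kernel_sum m T A {u. u \<le> w}"
    proof (rule kernel_sum_single[OF finA j(1)])
      show "(\<lambda>u. delta w u - T j w u) \<in> ker_op m (T j)" by (rule red_op_row_ker[OF redT[OF j(1)] less(1)])
    next
      fix u assume "delta w u - T j w u \<noteq> 0"
      then have "u = w \<or> T j w u \<noteq> 0" by (auto simp: delta_def split: if_splits)
      then show "u \<in> {u. u \<le> w}" using Bj by (auto simp: supp_less_def)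
    qed
    have b: "(\<lambda>u. T j w u - apply_op m NF (T j w) u) \<in> kernel_sum m T A {u. u \<le> w}"
    proof (rule minus_nf_in_kernel_sum_if_rows)
      show "T j w \<in> Vm m" using Bj by (simp add: supp_less_def)
    next
      fix y assume "length y = m" "T j w y \<noteq> 0"
      moreover from this have "y < w" using Bj by (simp add: supp_less_def)
      moreover have "kernel_sum m T A {u. u \<le> y} \<subseteq> kernel_sum m T A {u. u \<le> w}"
        by (rule kernel_sum_mono) (use \<open>y < w\<close> in auto)
      ultimately show "(\<lambda>u. delta y u - NF y u) \<in> kernel_sum m T A {u. u \<le> w}" using less(2) by blast
    qed
    have "(\<lambda>u. delta w u - NF w u) = (\<lambda>u. (delta w u - T j w u) + (T j w u - apply_op m NF (T j w) u))"
      using nf_reducible[OF less(1) True] by (simp add: j_def)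
    then show ?thesis using word_subspace_add[OF word_subspace_kernel_sum[OF finA] a b] by simp
  qed
qed

lemma minus_nf_in_kernel_sum:
  assumes v: "v \<in> Vm m" and Zv: "\<And>u. v u \<noteq> 0 \<Longrightarrow> u \<in> Z"
    and Zd: "\<And>u u'. u \<in> Z \<Longrightarrow> u' \<le> u \<Longrightarrow> u' \<in> Z"
  shows "(\<lambda>u. v u - apply_op m NF v u) \<in> kernel_sum m T A Z"
proof (rule minus_nf_in_kernel_sum_if_rows[OF v])
  fix y assume "length y = m" "v y \<noteq> 0"
  moreover have "kernel_sum m T A {u. u \<le> y} \<subseteq> kernel_sum m T A Z"
    by (rule kernel_sum_mono) (use Zd Zv \<open>v y \<noteq> 0\<close> in auto)
  ultimately show "(\<lambda>u. delta y u - NF y u) \<in> kernel_sum m T A Z"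
    using delta_minus_nf_in_kernel_sum by blast
qed

lemma kernel_sum_lead_reducible:
  assumes x: "x \<in> kernel_sum m T A UNIV" and lw: "length w = m" and B: "supp_le m w x" and xw: "x w \<noteq> 0"
  shows "\<exists>i\<in>A. T i w \<noteq> delta w"
proof -
  have "apply_op m NF x = (\<lambda>_. 0)" by (rule nf_kills_kernel_sum[OF x])
  moreover have "(\<lambda>u. x u - apply_op m NF x u) \<in> kernel_sum m T A {u. u \<le> w}"
    by (rule minus_nf_in_kernel_sum) (use B in \<open>auto simp: supp_le_def\<close>)
  ultimately have "x \<in> kernel_sum m T A {u. u \<le> w}" by simp
  then obtain vs where vs: "\<forall>i\<in>A. vs i \<in> ker_op m (T i)" "\<forall>i\<in>A. \<forall>u. vs i u \<noteq> 0 \<longrightarrow> u \<in> {u. u \<le> w}"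
    "x = (\<lambda>u. \<Sum>i\<in>A. vs i u)" using kernel_sumD by blast
  have "(\<Sum>i\<in>A. vs i w) \<noteq> 0" using xw vs(3) by simp
  then obtain i where i: "i \<in> A" "vs i w \<noteq> 0" by (meson sum.not_neutral_contains_not_neutral)
  have vk: "vs i \<in> ker_op m (T i)" using vs(1) i(1) by blast
  have "supp_le m w (vs i)" using vk vs(2) i(1) by (auto simp: supp_le_def ker_op_def)
  from red_op_lead_reducible[OF redT[OF i(1)] lw vk this i(2)] i(1) show ?thesis by blast
qed

lemma kernel_sum_supp_less:
  assumes x: "x \<in> kernel_sum m T A UNIV" and B: "supp_less m w x"
  shows "x \<in> kernel_sum m T A {u. u < w}"
proof -
  have "apply_op m NF x = (\<lambda>_. 0)" by (rule nf_kills_kernel_sum[OF x])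
  moreover have "(\<lambda>u. x u - apply_op m NF x u) \<in> kernel_sum m T A {u. u < w}"
    by (rule minus_nf_in_kernel_sum) (use B in \<open>auto simp: supp_less_def\<close>)
  ultimately show ?thesis by simp
qed

lemma kernel_sum_pair_supp_less:
  assumes A: "A = {i, j}" "i \<noteq> j" and a: "a \<in> ker_op m (T i)" and b: "b \<in> ker_op m (T j)"
    and ab: "supp_less m w (\<lambda>u. a u - b u)"
  obtains vi vj where "vi \<in> ker_op m (T i)" "vj \<in> ker_op m (T j)" "\<And>u. vi u \<noteq> 0 \<Longrightarrow> u < w"
    "\<And>u. a u - vi u = b u + vj u"
proof -
  have S: "word_subspace m (kernel_sum m T A UNIV)" by (rule word_subspace_kernel_sum[OF finA])
  have "a \<in> kernel_sum m T A UNIV" "b \<in> kernel_sum m T A UNIV"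
    using kernel_sum_single[OF finA, of i a m T UNIV] kernel_sum_single[OF finA, of j b m T UNIV] A a b
    by auto
  then have "(\<lambda>u. a u - b u) \<in> kernel_sum m T A {u. u < w}"
    using kernel_sum_supp_less[OF word_subspace_diff[OF S] ab] by blast
  then obtain vs where vs: "\<forall>l\<in>A. vs l \<in> ker_op m (T l)" "\<forall>l\<in>A. \<forall>u. vs l u \<noteq> 0 \<longrightarrow> u \<in> {u. u < w}"
    "(\<lambda>u. a u - b u) = (\<lambda>u. \<Sum>l\<in>A. vs l u)"
    using kernel_sumD by blast
  show ?thesis
  proof (rule that[of "vs i" "vs j"])
    show "vs i \<in> ker_op m (T i)" "vs j \<in> ker_op m (T j)" "\<And>u. vs i u \<noteq> 0 \<Longrightarrow> u < w"
      using vs(1,2) A by auto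
    show "a u - vs i u = b u + vs j u" for u
      using fun_cong[OF vs(3), of u] A by (simp add: algebra_simps)
  qed
qed
end

lemma kernel_sum_insert:
  fixes T :: "nat \<Rightarrow> 'x list \<Rightarrow> 'x list \<Rightarrow> 'k::field"
  assumes finA: "finite A" and j: "j \<notin> A"
  shows "plus_set (kernel_sum m T A UNIV) (ker_op m (T j)) = kernel_sum m T (insert j A) UNIV"
proof
  show "plus_set (kernel_sum m T A UNIV) (ker_op m (T j)) \<subseteq> kernel_sum m T (insert j A) UNIV"
  proof
    fix v assume "v \<in> plus_set (kernel_sum m T A UNIV) (ker_op m (T j))"
    then obtain a b where ab: "a \<in> kernel_sum m T A UNIV" "b \<in> ker_op m (T j)" "v = (\<lambda>u. a u + b u)"
      unfolding plus_set_def by blast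
    obtain vs where vs: "\<forall>i\<in>A. vs i \<in> ker_op m (T i)" "a = (\<lambda>u. \<Sum>i\<in>A. vs i u)"
      using kernel_sumD[OF ab(1)] by blast
    define vs' where "vs' = vs(j := b)"
    have "(\<lambda>u. \<Sum>i\<in>insert j A. vs' i u) \<in> kernel_sum m T (insert j A) UNIV"
      by (rule kernel_sumI) (use vs(1) ab(2) in \<open>auto simp: vs'_def\<close>)
    moreover have "(\<lambda>u. \<Sum>i\<in>insert j A. vs' i u) = v"
    proof
      fix u
      have "(\<Sum>i\<in>insert j A. vs' i u) = b u + (\<Sum>i\<in>A. vs' i u)"
        using finA j by (simp add: vs'_def)
      also have "(\<Sum>i\<in>A. vs' i u) = (\<Sum>i\<in>A. vs i u)"
        by (rule sum.cong) (use j in \<open>auto simp: vs'_def\<close>)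
      finally show "(\<Sum>i\<in>insert j A. vs' i u) = v u" using ab(3) vs(2) by simp
    qed
    ultimately show "v \<in> kernel_sum m T (insert j A) UNIV" by simp
  qed
next
  show "kernel_sum m T (insert j A) UNIV \<subseteq> plus_set (kernel_sum m T A UNIV) (ker_op m (T j))"
  proof
    fix v assume "v \<in> kernel_sum m T (insert j A) UNIV"
    then obtain vs where vs: "\<forall>i\<in>insert j A. vs i \<in> ker_op m (T i)" "v = (\<lambda>u. \<Sum>i\<in>insert j A. vs i u)"
      using kernel_sumD by blast
    have a: "(\<lambda>u. \<Sum>i\<in>A. vs i u) \<in> kernel_sum m T A UNIV"
      by (rule kernel_sumI) (use vs(1) in auto)
    have b: "vs j \<in> ker_op m (T j)" using vs(1) by simp
    have "(\<lambda>u. (\<lambda>u. \<Sum>i\<in>A. vs i u) u + vs j u) \<in> plus_set (kernel_sum m T A UNIV) (ker_op m (T j))"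
      by (rule plus_setI[OF a b])
    moreover have "(\<lambda>u. (\<lambda>u. \<Sum>i\<in>A. vs i u) u + vs j u) = v"
      using vs(2) finA j by (auto simp: add.commute intro!: ext)
    ultimately show "v \<in> plus_set (kernel_sum m T A UNIV) (ker_op m (T j))" by simp
  qed
qed

lemma kernel_sum_singleton:
  fixes T :: "nat \<Rightarrow> 'x list \<Rightarrow> 'x list \<Rightarrow> 'k::field"
  shows "kernel_sum m T {r} UNIV = ker_op m (T r)"
proof
  show "kernel_sum m T {r} UNIV \<subseteq> ker_op m (T r)"
  proof
    fix v assume "v \<in> kernel_sum m T {r} UNIV"
    then obtain vs where vs: "\<forall>i\<in>{r}. vs i \<in> ker_op m (T i)" "v = (\<lambda>u. \<Sum>i\<in>{r}. vs i u)"
      using kernel_sumD by blast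
    then show "v \<in> ker_op m (T r)" by simp
  qed
next
  show "ker_op m (T r) \<subseteq> kernel_sum m T {r} UNIV"
    using kernel_sum_single[of "{r}" r] by blast
qed

lemma wedge_list_snoc: "Ts \<noteq> [] \<Longrightarrow> wedge_list m (Ts @ [T]) = wedge m (wedge_list m Ts) T"
  by (cases Ts) simp_all

lemma ker_wedge_list_upt:
  fixes T :: "nat \<Rightarrow> 'x::{finite,linorder} list \<Rightarrow> 'x list \<Rightarrow> 'k::field"
  shows "ker_op m (wedge_list m (map T [r..<Suc (r + j)])) = kernel_sum m T {r..<Suc (r + j)} UNIV"
proof (induction j)
  case 0 then show ?case using kernel_sum_singleton[of m T r] by simp
next
  case (Suc j)
  have e: "map T [r..<Suc (r + Suc j)] = map T [r..<Suc (r + j)] @ [T (Suc (r + j))]" by simp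
  have ne: "map T [r..<Suc (r + j)] \<noteq> []" by simp
  have "ker_op m (wedge_list m (map T [r..<Suc (r + Suc j)]))
      = plus_set (kernel_sum m T {r..<Suc (r + j)} UNIV) (ker_op m (T (Suc (r + j))))"
    unfolding e wedge_list_snoc[OF ne] ker_wedge Suc.IH ..
  also have "\<dots> = kernel_sum m T (insert (Suc (r + j)) {r..<Suc (r + j)}) UNIV"
    by (rule kernel_sum_insert) auto
  finally show ?case by (simp add: atLeastLessThanSuc)
qed

lemma ker_foldl_vee:
  fixes T :: "'x::{finite,linorder} list \<Rightarrow> 'x list \<Rightarrow> 'k::field"
  shows "ker_op m (foldl (vee m) T Ts) = ker_op m T \<inter> (\<Inter>T'\<in>set Ts. ker_op m T')"
  by (induction Ts arbitrary: T) (auto simp: ker_vee)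

lemma red_op_foldl_vee:
  fixes T :: "'x::{finite,linorder} list \<Rightarrow> 'x list \<Rightarrow> 'k::field"
  shows "red_op m T \<Longrightarrow> red_op m (foldl (vee m) T Ts)"
  by (induction Ts arbitrary: T) (auto simp: red_op_vee)

lemma upt_Suc_Cons: "[r..<Suc (r + j)] = r # [Suc r..<Suc (r + j)]"
  by (rule upt_conv_Cons) simp

lemma ker_vee_list_upt:
  fixes T :: "nat \<Rightarrow> 'x::{finite,linorder} list \<Rightarrow> 'x list \<Rightarrow> 'k::field"
  shows "ker_op m (vee_list m (map T [r..<Suc (r + j)])) = (\<Inter>i\<in>{r..<Suc (r + j)}. ker_op m (T i))"
proof -
  have "{r..<Suc (r + j)} = insert r {Suc r..<Suc (r + j)}" by auto
  then show ?thesis unfolding upt_Suc_Cons by (simp add: ker_foldl_vee image_image del: upt_Suc)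
qed

lemma red_op_vee_list_upt:
  fixes T :: "nat \<Rightarrow> 'x::{finite,linorder} list \<Rightarrow> 'x list \<Rightarrow> 'k::field"
  shows "red_op m (T r) \<Longrightarrow> red_op m (vee_list m (map T [r..<Suc (r + j)]))"
  unfolding upt_Suc_Cons by (simp add: red_op_foldl_vee del: upt_Suc)

section \<open>Kernels of the operators \<open>S_i^(m)\<close>\<close>

context
  fixes N :: nat and R :: "('x::{finite,linorder} list \<Rightarrow> 'k::field) set" and m :: nat
  assumes red: "reduced_hom_pres N R" and ec: "extra_confluent N R"
begin

abbreviation "Sop \<equiv> Sm N R m"
abbreviation "Kop i \<equiv> ker_op m (Sm N R m i)"

lemma side_confluent_R: "side_confluent N R"
  using ec by (simp add: extra_confluent_def)

lemma red_op_Sm: "i + N \<le> m \<Longrightarrow> red_op m (Sop i)"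
  using red_op_embed[OF red_op_S_op[OF red], of i "m - N - i"] by (simp add: Sm_def)

lemma ker_Sm_gap:
  assumes d: "2 \<le> d" "d \<le> N - 1" and im: "i + d + N \<le> m"
  shows "Kop i \<inter> Kop (i + d) \<subseteq> Kop (i + d - 1)"
proof -
  define c where "c = m - N - d - i"
  have mm: "i + (N + d) + c = m" using im by (simp add: c_def)
  have "Sop (i + j) = embed i (N + d) c (embed j N (d - j) (S_op N R))" if "j \<le> d" for j
    unfolding Sm_def by (rule embed_embed_eq[symmetric]) (use im that in \<open>auto simp: c_def\<close>)
  from this[of 0] this[of d] this[of "d - 1"] have
    "Sop i = embed i (N + d) c (embed 0 N d (S_op N R))"
    "Sop (i + d) = embed i (N + d) c (embed d N 0 (S_op N R))"
    "Sop (i + d - 1) = embed i (N + d) c (embed (d - 1) N 1 (S_op N R))"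
    using d by (simp_all add: add_diff_assoc)
  moreover have "ker_op (i + (N + d) + c) (embed i (N + d) c (embed 0 N d (S_op N R)))
      \<inter> ker_op (i + (N + d) + c) (embed i (N + d) c (embed d N 0 (S_op N R)))
      \<subseteq> ker_op (i + (N + d) + c) (embed i (N + d) c (embed (d - 1) N 1 (S_op N R)))"
    by (rule ker_embed_Int_subset) (use extra_confluent_ker[OF red ec d] d in \<open>auto intro: is_endo_embed\<close>)
  ultimately show ?thesis unfolding mm by simp
qed

lemma ker_Sm_between:
  assumes "0 < j" "j < d" "d \<le> N - 1" "i + d + N \<le> m"
  shows "Kop i \<inter> Kop (i + d) \<subseteq> Kop (i + j)"
  using assms
proof (induction d rule: less_induct)
  case (less d)
  have gap: "Kop i \<inter> Kop (i + d) \<subseteq> Kop (i + (d - 1))"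
    using ker_Sm_gap[of d i] less.prems by (simp add: add_diff_assoc)
  show ?case
  proof (cases "j = d - 1")
    case True then show ?thesis using gap by simp
  next
    case False
    then have "Kop i \<inter> Kop (i + (d - 1)) \<subseteq> Kop (i + j)"
      by (intro less.IH) (use less.prems in auto)
    then show ?thesis using gap by blast
  qed
qed

lemma Sm_braid:
  assumes ij: "i \<le> j" "j - i \<le> N - 1" and jm: "j + N \<le> m"
  shows "\<exists>k\<ge>1. braid m (Sop i) (Sop j) k = braid m (Sop j) (Sop i) k"
proof (cases "i = j")
  case True then show ?thesis by (intro exI[of _ 1]) simp
next
  case False
  then have "1 \<le> j - i" using ij by simp
  from Sm_braid_shift[OF side_confluent_R this ij(2), of i m] ij jm
  obtain k where "k \<ge> 1" "braid m (Sop j) (Sop i) k = braid m (Sop i) (Sop j) k" by auto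
  then show ?thesis by metis
qed

lemma braided_family_Sm:
  assumes finA: "finite A"
    and Am: "\<And>i. i \<in> A \<Longrightarrow> i + N \<le> m"
    and Ad: "\<And>i j. i \<in> A \<Longrightarrow> j \<in> A \<Longrightarrow> i \<le> j \<Longrightarrow> j - i \<le> N - 1"
  shows "braided_family m Sop A"
proof
  show "finite A" by (rule finA)
next
  fix i assume "i \<in> A" then show "red_op m (Sop i)" using red_op_Sm Am by blast
next
  fix i j assume i: "i \<in> A" and j: "j \<in> A"
  show "\<exists>k\<ge>1. braid m (Sop i) (Sop j) k = braid m (Sop j) (Sop i) k"
  proof (cases "i \<le> j")
    case True then show ?thesis using Sm_braid[OF True Ad[OF i j True] Am[OF j]] by blast
  next
    case False
    then have "j \<le> i" by simp
    from Sm_braid[OF this Ad[OF j i this] Am[OF i]] show ?thesis by metis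
  qed
qed

lemma common_kernel_lead_vector:
  assumes ij: "i \<le> j" "j - i \<le> N - 1" "j + N \<le> m"
    and lw: "length w = m" and ri: "Sop i w \<noteq> delta w" and rj: "Sop j w \<noteq> delta w"
  shows "\<exists>y. y \<in> Kop i \<and> y \<in> Kop j \<and> supp_le m w y \<and> y w = 1"
proof -
  have redi: "red_op m (Sop i)" and redj: "red_op m (Sop j)" using red_op_Sm ij by auto
  define a where "a = (\<lambda>u. delta w u - Sop i w u)"
  define b where "b = (\<lambda>u. delta w u - Sop j w u)"
  have ak: "a \<in> Kop i" unfolding a_def by (rule red_op_row_ker[OF redi lw])
  have bk: "b \<in> Kop j" unfolding b_def by (rule red_op_row_ker[OF redj lw])
  have Bi: "supp_less m w (Sop i w)" by (rule red_op_row_supp_less[OF redi lw ri])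
  have Bj: "supp_less m w (Sop j w)" by (rule red_op_row_supp_less[OF redj lw rj])
  have aBl: "supp_le m w a" using Bi lw ak unfolding a_def
    by (auto simp: supp_le_def supp_less_def ker_op_def delta_def split: if_splits)
  have aw: "a w = 1" using Bi by (auto simp: a_def supp_less_def)
  show ?thesis
  proof (cases "i = j")
    case True then show ?thesis using ak aBl aw by blast
  next
    case False
    have D: "braided_family m Sop {i, j}" by (rule braided_family_Sm) (use ij in auto)
    have "(\<lambda>u. a u - b u) \<in> Vm m"
      using word_subspace_diff[OF word_subspace_Vm, of a m b] ak bk by (simp add: ker_op_def)
    moreover have "u < w" if "a u - b u \<noteq> 0" for u
    proof -
      have "Sop i w u \<noteq> 0 \<or> Sop j w u \<noteq> 0" using that by (auto simp: a_def b_def)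
      then show ?thesis using Bi Bj by (auto simp: supp_less_def)
    qed
    ultimately have "supp_less m w (\<lambda>u. a u - b u)" by (simp add: supp_less_def)
    then obtain vi vj where v: "vi \<in> Kop i" "vj \<in> Kop j" "\<And>u. vi u \<noteq> 0 \<Longrightarrow> u < w"
      "\<And>u. a u - vi u = b u + vj u"
      using braided_family.kernel_sum_pair_supp_less[OF D refl False ak bk] by blast
    define y where "y = (\<lambda>u. a u - vi u)"
    have "y \<in> Kop i" unfolding y_def by (rule word_subspace_diff[OF word_subspace_ker ak v(1)])
    moreover have "y = (\<lambda>u. b u + vj u)" using v(4) by (simp add: y_def)
    then have "y \<in> Kop j" using word_subspace_add[OF word_subspace_ker bk v(2)] by simp
    moreover have "y w = 1" using aw v(3)[of w] by (auto simp: y_def)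
    moreover have "supp_le m w y"
      using aBl v(3) \<open>y \<in> Kop i\<close> by (force simp: supp_le_def y_def ker_op_def)
    ultimately show ?thesis by blast
  qed
qed

lemma kernel_sum_lead_in_last_kernels:
  assumes k: "2 \<le> k" "k \<le> N - 1" and rk: "r + k + N \<le> m"
    and x: "x \<in> kernel_sum m Sop {r..<r + k} UNIV" "x \<in> Kop (r + k)"
    and lw: "length w = m" and xB: "supp_le m w x" and xw: "x w \<noteq> 0"
  shows "\<exists>y. y \<in> Kop (r + k - 1) \<and> y \<in> Kop (r + k) \<and> supp_le m w y \<and> y w = 1"
proof -
  have D: "braided_family m Sop {r..<r + k}" by (rule braided_family_Sm) (use k rk in auto)
  have red_last: "red_op m (Sop (r + k))" "red_op m (Sop (r + k - 1))" using red_op_Sm rk by auto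
  have rk_w: "Sop (r + k) w \<noteq> delta w" by (rule red_op_lead_reducible[OF red_last(1) lw x(2) xB xw])
  obtain i where i: "i \<in> {r..<r + k}" "Sop i w \<noteq> delta w"
    using braided_family.kernel_sum_lead_reducible[OF D x(1) lw xB xw] by blast
  have "Sop (r + k - 1) w \<noteq> delta w"
  proof (cases "i = r + k - 1")
    case True then show ?thesis using i by simp
  next
    case False
    define d where "d = r + k - i"
    have d: "2 \<le> d" "d \<le> N - 1" "i + d + N \<le> m" "i + d = r + k"
      using False i(1) k rk by (auto simp: d_def)
    have "i \<le> r + k" "r + k - i \<le> N - 1" using d by auto
    then obtain y where y: "y \<in> Kop i" "y \<in> Kop (r + k)" "supp_le m w y" "y w = 1"
      using common_kernel_lead_vector[OF _ _ rk lw i(2) rk_w] by blast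
    then have "y \<in> Kop (r + k - 1)" using ker_Sm_gap[OF d(1-3)] unfolding d(4) by blast
    then show ?thesis using red_op_lead_reducible[OF red_last(2) lw _ y(3)] y(4) by auto
  qed
  moreover have "r + k - 1 \<le> r + k" "r + k - (r + k - 1) \<le> N - 1" using k by auto
  ultimately show ?thesis using common_kernel_lead_vector[OF _ _ rk lw _ rk_w] by blast
qed

lemma kernel_sum_Int_ker_Sm:
  assumes k: "2 \<le> k" "k \<le> N - 1" and rk: "r + k + N \<le> m"
    and x: "x \<in> kernel_sum m Sop {r..<r + k} UNIV" "x \<in> Kop (r + k)"
  shows "x \<in> Kop (r + k - 1)"
proof -
  let ?K = "kernel_sum m Sop {r..<r + k} UNIV"
  have KS: "word_subspace m ?K" by (rule word_subspace_kernel_sum) simp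
  have "x \<in> Vm m" using x(2) by (simp add: ker_op_def)
  then show ?thesis using x
  proof (induction x rule: lead_word_induct)
    case zero show ?case by (rule word_subspace_zero[OF word_subspace_ker])
  next
    case (lead x w)
    obtain y where y: "y \<in> Kop (r + k - 1)" "y \<in> Kop (r + k)" "supp_le m w y" "y w = 1"
      using kernel_sum_lead_in_last_kernels[OF k rk lead.prems lead.hyps(1-3)] by blast
    define x' where "x' = (\<lambda>u. x u - x w * y u)"
    have y_sum: "(\<lambda>u. x w * y u) \<in> ?K"
      using word_subspace_smult[OF KS] kernel_sum_single[of _ "r + k - 1" y m Sop] y(1) k by auto
    have "x' \<in> ?K" unfolding x'_def by (rule word_subspace_diff[OF KS lead.prems(1) y_sum])
    moreover have "x' \<in> Kop (r + k)" unfolding x'_def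
      by (rule word_subspace_diff[OF word_subspace_ker lead.prems(2) word_subspace_smult[OF word_subspace_ker y(2)]])
    moreover have "supp_less m w x'"
    proof -
      have "x' \<in> Vm m" using \<open>x' \<in> Kop (r + k)\<close> by (simp add: ker_op_def)
      moreover have "u < w" if "x' u \<noteq> 0" for u
      proof -
        have "x u \<noteq> 0 \<or> y u \<noteq> 0" "u \<noteq> w" using that y(4) by (auto simp: x'_def)
        then show ?thesis using lead.hyps(2) y(3) by (auto simp: supp_le_def)
      qed
      ultimately show ?thesis by (simp add: supp_less_def)
    qed
    ultimately have "x' \<in> Kop (r + k - 1)" using lead.IH by blast
    then have "(\<lambda>u. x' u + x w * y u) \<in> Kop (r + k - 1)"
      by (rule word_subspace_add[OF word_subspace_ker _ word_subspace_smult[OF word_subspace_ker y(1)]])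
    then show ?case by (simp add: x'_def)
  qed
qed

lemma Int_ker_Sm_upt_eq:
  assumes k: "2 \<le> k" "k \<le> N - 1" and rk: "r + k + N \<le> m"
  shows "(\<Inter>i\<in>{r..<Suc (r + k)}. Kop i) = Kop r \<inter> Kop (r + k)"
proof
  show "Kop r \<inter> Kop (r + k) \<subseteq> (\<Inter>i\<in>{r..<Suc (r + k)}. Kop i)"
  proof (intro subsetI INT_I)
    fix v i assume v: "v \<in> Kop r \<inter> Kop (r + k)" and i: "i \<in> {r..<Suc (r + k)}"
    consider "i = r" | "i = r + k" | "0 < i - r" "i - r < k" using i by fastforce
    then show "v \<in> Kop i"
    proof cases
      case 3
      then have "v \<in> Kop (r + (i - r))" using ker_Sm_between[of "i - r" k r] v k rk by auto
      then show ?thesis using i by simp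
    qed (use v in auto)
  qed
qed auto

lemma kernel_sum_Int_ker_Sm_eq:
  assumes k: "2 \<le> k" "k \<le> N - 1" and rk: "r + k + N \<le> m"
  shows "kernel_sum m Sop {r..<r + k} UNIV \<inter> Kop (r + k) = Kop (r + k - 1) \<inter> Kop (r + k)"
proof
  show "kernel_sum m Sop {r..<r + k} UNIV \<inter> Kop (r + k) \<subseteq> Kop (r + k - 1) \<inter> Kop (r + k)"
    using kernel_sum_Int_ker_Sm[OF k rk] by blast
  show "Kop (r + k - 1) \<inter> Kop (r + k) \<subseteq> kernel_sum m Sop {r..<r + k} UNIV \<inter> Kop (r + k)"
    using kernel_sum_single[of "{r..<r + k}" "r + k - 1" _ m Sop UNIV] k by auto
qed

end

theorem lemma4p3p1:
  fixes R :: "('x::{linorder,finite} list \<Rightarrow> 'k::field) set"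
    and N m r k :: nat
  assumes "N \<ge> 2"
    and "reduced_hom_pres N R"
    and "extra_confluent N R"
    and "m \<ge> N + 2"
    and "2 \<le> k" and "k \<le> N - 1"
    and "r + k \<le> m - N"
  shows "vee m (Sm N R m r) (Sm N R m (r + k))
           = vee_list m (map (Sm N R m) [r..<r + k + 1])
         \<and> vee m (wedge_list m (map (Sm N R m) [r..<r + k])) (Sm N R m (r + k))
           = vee m (Sm N R m (r + k - 1)) (Sm N R m (r + k))"
proof -
  have k: "2 \<le> k" "k \<le> N - 1" and rk: "r + k + N \<le> m" using assms by auto
  have ker_vee_list: "ker_op m (vee_list m (map (Sm N R m) [r..<r + k + 1]))
      = ker_op m (vee m (Sm N R m r) (Sm N R m (r + k)))"
    unfolding Suc_eq_plus1[symmetric] ker_vee_list_upt ker_vee Int_ker_Sm_upt_eq[OF assms(2,3) k rk] ..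
  have red_vee_list: "red_op m (vee_list m (map (Sm N R m) [r..<r + k + 1]))"
    unfolding Suc_eq_plus1[symmetric] by (rule red_op_vee_list_upt, rule red_op_Sm[OF assms(2,3)]) (use rk in simp)
  have "Suc (r + (k - 1)) = r + k" using k by simp
  then have "ker_op m (wedge_list m (map (Sm N R m) [r..<r + k])) = kernel_sum m (Sm N R m) {r..<r + k} UNIV"
    using ker_wedge_list_upt[of m "Sm N R m" r "k - 1"] by simp
  then have "ker_op m (wedge_list m (map (Sm N R m) [r..<r + k])) \<inter> ker_op m (Sm N R m (r + k))
      = ker_op m (Sm N R m (r + k - 1)) \<inter> ker_op m (Sm N R m (r + k))"
    using kernel_sum_Int_ker_Sm_eq[OF assms(2,3) k rk] by simp
  then show ?thesis
    using red_op_eqI[OF red_op_vee red_vee_list ker_vee_list[symmetric]] by (simp add: vee_def)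
qed

end
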